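(* Let $V,W\in\mathbf{R}^{r\times n}$ be configurations of $n$ vectors in $\mathbf{R}^r$ in general position. Then $$f^*_W(x,y)-f^*_V(x,y)=\sum_{j,k}g_{j,k}(W\to V)\,(x+y)^k(x+1)^{n-r-k}y^j,$$ where $g_{j,k}(W\to V)=-g_{j,k}(V\to W)$.
   Context: Throughout, $n\ge r\ge1$, $[n]=\{1,\dots,n\}$. A vector configuration is a matrix $V=[v_1|\cdots|v_n]\in\mathbf{R}^{r\times n}$; it is in general position if any $r$ columns are linearly independent. For $F\in\{-1,0,+1\}^n$ let $F_+,F_0,F_-$ be the sets of $i$ with $F_i=+1,0,-1$. $\mathcal{F}(V)$ is the set of sign vectors $(\operatorname{sgn}\langle v_1,u\rangle,\dots,\operatorname{sgn}\langle v_n,u\rangle)$, $u\in\mathbf{R}^r\setminus\{0\}$. $\mathcal{F}^*(V)$ (dependency patterns) is the set of sign vectors $(\operatorname{sgn}\lambda_1,\dots,\operatorname{sgn}\lambda_n)$ over all nontrivial linear dependencies $\sum_i\lambda_iv_i=0$ (not all $\lambda_i$ zero). The $f^*$-polynomial is $f^*_V(x,y)=\sum_{F\in\mathcal{F}^*(V)}x^{|F_0|}y^{|F_-|}$. Mutations: $V,W$ in general position differ by a mutation if there is a continuous path $V(t)$, $t\in[0,1]$, $V(0)=V$, $V(1)=W$, and $t_0\in(0,1)$ such that $V(t)$ is in general position for $t\neq t_0$, at $t_0$ exactly one $r$-set $R\subseteq[n]$ of columns is dependent, all $(r-1)$-sets of columns of $V(t_0)$ are independent, and $\operatorname{sgn}\det[v_i(t)]_{i\in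 R}$ changes at $t_0$. There is then $Y\in\{\pm1\}^n$ such that the elements of $\{\pm1\}^n$ in $\mathcal{F}(W)\setminus\mathcal{F}(V)$ are exactly $\pm Y$; with $i=|R\cap Y_-|$, $\ell=|Y_-\setminus R|$, the mutation is of type $(i,\ell)\equiv(r-i,n-r-\ell)$. Any two configurations in general position are joined by a finite sequence of mutations. For a single mutation of type $(i,\ell)$, $g(V\to W)\in\mathbf{Z}^{(r+1)\times(n-r+1)}$ (indices $0\le j\le r$, $0\le k\le n-r$) is $0$ if $2i=r$ or $2\ell=n-r$, and otherwise has entries $+1$ at $(i,\ell)$ and $(r-i,n-r-\ell)$, $-1$ at $(r-i,\ell)$ and $(i,n-r-\ell)$, $0$ elsewhere; for a sequence of mutations $V=V_0,\dots,V_N=W$, $g(V\to W)=\sum_s g(V_{s-1}\to V_s)$ (this depends only on $V$ and $W$). *)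

theory Defs
  imports "HOL-Analysis.Analysis"
begin

text \<open>A configuration of n vectors in R^r is a function V :: nat => real^'r;
  only the columns V 0, ..., V (n-1) are relevant (columns are indexed 0..n-1).
  Sign vectors are functions nat => real with values in {-1,0,1} on {..<n}
  and value 0 outside {..<n}.\<close>

definition cols_indep :: "(nat \<Rightarrow> real^'r) \<Rightarrow> nat set \<Rightarrow> bool" where
  "cols_indep V S \<longleftrightarrow> (\<forall>c. (\<Sum>i\<in>S. c i *\<^sub>R V i) = 0 \<longrightarrow> (\<forall>i\<in>S. c i = 0))"

definition gen_pos :: "nat \<Rightarrow> (nat \<Rightarrow> real^'r) \<Rightarrow> bool" where
  "gen_pos n V \<longleftrightarrow>
     (\<forall>S. S \<subseteq> {..<n} \<and> card S = CARD('r) \<longrightarrow> cols_indep V S)"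

definition covectors :: "nat \<Rightarrow> (nat \<Rightarrow> real^'r) \<Rightarrow> (nat \<Rightarrow> real) set" where
  "covectors n V = {F. \<exists>u. u \<noteq> 0 \<and> F = (\<lambda>i. if i < n then sgn (V i \<bullet> u) else 0)}"

definition dep_patterns :: "nat \<Rightarrow> (nat \<Rightarrow> real^'r) \<Rightarrow> (nat \<Rightarrow> real) set" where
  "dep_patterns n V = {F. \<exists>lam::nat \<Rightarrow> real. (\<exists>i<n. lam i \<noteq> 0) \<and>
        (\<Sum>i<n. lam i *\<^sub>R V i) = 0 \<and> F = (\<lambda>i. if i < n then sgn (lam i) else 0)}"

definition fstar :: "nat \<Rightarrow> (nat \<Rightarrow> real^'r) \<Rightarrow> real \<Rightarrow> real \<Rightarrow> real" where
  "fstar n V x y = (\<Sum>F\<in>dep_patterns n V.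
       x ^ card {i. i < n \<and> F i = 0} * y ^ card {i. i < n \<and> F i = -1})"

text \<open>Determinant of the r x r matrix with columns V i, i in R (for a fixed
  enumeration of R; only its sign change along a path matters).\<close>
definition det_cols :: "(nat \<Rightarrow> real^'r) \<Rightarrow> nat set \<Rightarrow> real" where
  "det_cols V R = (let e = (SOME e. bij_betw e (UNIV::'r set) R)
                   in det (\<chi> a b. V (e b) $ a :: real^'r^'r))"

definition gmat :: "nat \<Rightarrow> nat \<Rightarrow> nat \<Rightarrow> nat \<Rightarrow> nat \<Rightarrow> nat \<Rightarrow> int" where
  "gmat r n i l = (\<lambda>j k.
     if 2 * i = r \<or> 2 * l = n - r then 0
     else (if (j, k) = (i, l) then 1 else 0) + (if (j, k) = (r - i, n - r - l) then 1 else 0)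
        - (if (j, k) = (r - i, l) then 1 else 0) - (if (j, k) = (i, n - r - l) then 1 else 0))"

definition mutation :: "nat \<Rightarrow> (nat \<Rightarrow> real^'r) \<Rightarrow> (nat \<Rightarrow> real^'r) \<Rightarrow> (nat \<Rightarrow> nat \<Rightarrow> int) \<Rightarrow> bool" where
  "mutation n V W G \<longleftrightarrow> gen_pos n V \<and> gen_pos n W \<and>
    (\<exists>(P :: real \<Rightarrow> nat \<Rightarrow> real^'r) t0 R Y.
       (\<forall>i<n. continuous_on {0..1} (\<lambda>t. P t i)) \<and>
       (\<forall>i<n. P 0 i = V i) \<and> (\<forall>i<n. P 1 i = W i) \<and>
       0 < t0 \<and> t0 < 1 \<and>
       (\<forall>t\<in>{0..1}. t \<noteq> t0 \<longrightarrow> gen_pos n (P t)) \<and>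
       R \<subseteq> {..<n} \<and> card R = CARD('r) \<and>
       (\<forall>S. S \<subseteq> {..<n} \<and> card S = CARD('r) \<longrightarrow> (\<not> cols_indep (P t0) S \<longleftrightarrow> S = R)) \<and>
       (\<forall>S. S \<subseteq> {..<n} \<and> card S = CARD('r) - 1 \<longrightarrow> cols_indep (P t0) S) \<and>
       (\<forall>s t. 0 \<le> s \<and> s < t0 \<and> t0 < t \<and> t \<le> 1 \<longrightarrow>
            sgn (det_cols (P s) R) \<noteq> sgn (det_cols (P t) R)) \<and>
       (\<forall>i<n. Y i \<in> {-1, 1}) \<and> (\<forall>i\<ge>n. Y i = 0) \<and>
       {F \<in> covectors n W - covectors n V. \<forall>i<n. F i \<in> {-1, 1}} = {Y, - Y} \<and>
       G = gmat (CARD('r)) n (card (R \<inter> {j. Y j = -1})) (card ({j. j < n \<and> Y j = -1} - R)))"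

definition mut_seq :: "nat \<Rightarrow> (nat \<Rightarrow> real^'r) \<Rightarrow> (nat \<Rightarrow> real^'r) \<Rightarrow> (nat \<Rightarrow> nat \<Rightarrow> int) \<Rightarrow> bool" where
  "mut_seq n V W G \<longleftrightarrow>
    (\<exists>(Vs :: nat \<Rightarrow> nat \<Rightarrow> real^'r) (Gs :: nat \<Rightarrow> nat \<Rightarrow> nat \<Rightarrow> int) N.
       (\<forall>i<n. Vs 0 i = V i) \<and> (\<forall>i<n. Vs N i = W i) \<and>
       (\<forall>s<N. mutation n (Vs s) (Vs (Suc s)) (Gs s)) \<and>
       G = (\<lambda>j k. \<Sum>s<N. Gs s j k))"

end

theory Submission
  imports Defs
begin

(*
  In general position the dependency patterns of a configuration are exactly the sign vectors
  lying conformally above one of its circuits, the sign vectors of dependencies supported on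
  r + 1 columns.  Along a mutation through the r-set R, Cramer's rule and continuity show that
  every circuit whose support does not contain R keeps its signs.  The circuits supported on R
  and one further column a carry, up to a global sign, the signs of a single full sign vector Z,
  except that their sign at a flips during the mutation; Z and -Z are the new covectors.  Hence
  the lost patterns are the sign vectors below Z or -Z that agree with it on R and do not vanish
  off R, the gained ones are the same with Z flipped outside R, and counting them gives the four
  terms of g.  Along a sequence of mutations the differences telescope, and g(W -> V) = -g(V -> W)
  because the polynomials (x + y)^k (x + 1)^(n - r - k) y^j are linearly independent.
*)

section \<open>Columns, determinants and general position\<close>

definition col_matrix :: "(nat \<Rightarrow> real^'r) \<Rightarrow> ('r \<Rightarrow> nat) \<Rightarrow> real^'r^'r" where
  "col_matrix V e = (\<chi> a b. V (e b) $ a)"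

definition col_enum :: "nat set \<Rightarrow> 'r::finite \<Rightarrow> nat" where
  "col_enum S = (SOME e. bij_betw e UNIV S)"

lemma col_matrix_mult_vector: "col_matrix V e *v x = (\<Sum>j\<in>UNIV. x $ j *\<^sub>R V (e j))"
  by (simp add: col_matrix_def vec_eq_iff matrix_vector_mult_def sum_component mult.commute)

lemma det_cols_eq: "det_cols V R = det (col_matrix V (col_enum R))"
  unfolding det_cols_def col_enum_def Let_def col_matrix_def ..

lemma col_enum_bij:
  assumes "finite S" "card S = CARD('r::finite)"
  shows "bij_betw (col_enum S :: 'r \<Rightarrow> nat) UNIV S"
proof -
  have "\<exists>e. bij_betw e (UNIV :: 'r set) S"
    using finite_same_card_bij[of "UNIV :: 'r set" S] assms by auto
  then show ?thesis unfolding col_enum_def by (rule someI_ex)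
qed

lemma cols_indepD: "cols_indep V S \<Longrightarrow> (\<Sum>i\<in>S. c i *\<^sub>R V i) = 0 \<Longrightarrow> i \<in> S \<Longrightarrow> c i = 0"
  unfolding cols_indep_def by blast

lemma det_nonzero_iff_kernel_trivial: "det (A :: real^'r^'r) \<noteq> 0 \<longleftrightarrow> (\<forall>x. A *v x = 0 \<longrightarrow> x = 0)"
  by (metis invertible_det_nz invertible_left_inverse matrix_left_invertible_ker)

lemma cols_indep_iff_det:
  assumes e: "bij_betw e (UNIV :: 'r set) S"
  shows "cols_indep (V :: nat \<Rightarrow> real^'r) S \<longleftrightarrow> det (col_matrix V e) \<noteq> 0"
proof -
  have inj: "inj e" and S: "S = range e"
    using e by (auto simp: bij_betw_def)
  have reindex: "(\<Sum>i\<in>S. c i *\<^sub>R V i) = col_matrix V e *v (\<chi> j. c (e j))" for c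
    unfolding S col_matrix_mult_vector by (simp add: sum.reindex[OF inj])
  have "cols_indep V S \<longleftrightarrow> (\<forall>x. col_matrix V e *v x = 0 \<longrightarrow> x = 0)"
  proof
    assume indep: "cols_indep V S"
    show "\<forall>x. col_matrix V e *v x = 0 \<longrightarrow> x = 0"
    proof (intro allI impI)
      fix x assume "col_matrix V e *v x = 0"
      then have "(\<Sum>i\<in>S. x $ inv e i *\<^sub>R V i) = 0"
        unfolding reindex by (simp add: inv_f_f[OF inj])
      then have "\<forall>i\<in>S. x $ inv e i = 0"
        using cols_indepD[OF indep, where c = "\<lambda>i. x $ inv e i"] by blast
      then show "x = 0"
        unfolding S vec_eq_iff by (simp add: inv_f_f[OF inj])
    qed
  next
    assume ker: "\<forall>x. col_matrix V e *v x = 0 \<longrightarrow> x = 0"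
    show "cols_indep V S"
      unfolding cols_indep_def
    proof (intro allI impI)
      fix c assume "(\<Sum>i\<in>S. c i *\<^sub>R V i) = 0"
      then have "(\<chi> j. c (e j)) = 0" using ker unfolding reindex by blast
      then show "\<forall>i\<in>S. c i = 0" unfolding S by (simp add: vec_eq_iff)
    qed
  qed
  then show ?thesis by (simp add: det_nonzero_iff_kernel_trivial)
qed

lemma cols_indep_subset:
  assumes "cols_indep V T" "S \<subseteq> T" "finite T"
  shows "cols_indep V S"
  unfolding cols_indep_def
proof (intro allI impI)
  fix c assume "(\<Sum>i\<in>S. c i *\<^sub>R V i) = 0"
  moreover have "(\<Sum>i\<in>T. (if i \<in> S then c i else 0) *\<^sub>R V i) = (\<Sum>i\<in>S. c i *\<^sub>R V i)"
    using assms(2,3) by (intro sum.mono_neutral_cong_right) auto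
  ultimately have "(if i \<in> S then c i else 0) = 0" if "i \<in> T" for i
    using cols_indepD[OF assms(1) _ that, where c = "\<lambda>i. if i \<in> S then c i else 0"] by simp
  then show "\<forall>i\<in>S. c i = 0" using assms(2) by (metis subsetD)
qed

lemma cols_indep_sum_zero:
  assumes "cols_indep V S" "S \<subseteq> {..<n}" "(\<Sum>i<n. c i *\<^sub>R V i) = 0" "\<forall>i<n. i \<notin> S \<longrightarrow> c i = 0"
  shows "\<forall>i\<in>S. c i = 0"
proof -
  have "(\<Sum>i<n. c i *\<^sub>R V i) = (\<Sum>i\<in>S. c i *\<^sub>R V i)"
    using assms(2,4) by (intro sum.mono_neutral_right) auto
  then show ?thesis using assms(1,3) unfolding cols_indep_def by simp
qed

lemma exists_superset_with_card:
  assumes "finite U" "S \<subseteq> U" "card S \<le> k" "k \<le> card U"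
  obtains T where "S \<subseteq> T" "T \<subseteq> U" "card T = k"
proof -
  have "finite S" using assms(1,2) by (rule finite_subset[rotated])
  moreover have "k - card S \<le> card (U - S)"
    using assms by (simp add: card_Diff_subset finite_subset)
  then obtain T0 where "T0 \<subseteq> U - S" "card T0 = k - card S" "finite T0"
    by (rule obtain_subset_with_card_n)
  ultimately have "card (S \<union> T0) = k"
    using assms(3) by (subst card_Un_disjoint) auto
  then show ?thesis using that \<open>T0 \<subseteq> U - S\<close> assms(2) by blast
qed

lemma exists_index_outside:
  assumes "R \<subseteq> {..<n}" "card R < n"
  obtains a where "a < n" "a \<notin> R"
proof -
  have "\<not> {..<n} \<subseteq> R"
  proof
    assume "{..<n} \<subseteq> R"
    then have "card {..<n} \<le> card R" by (rule card_mono[OF finite_subset[OF assms(1) finite_lessThan]])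
    then show False using assms(2) by simp
  qed
  then show ?thesis using that by blast
qed

lemma gen_pos_cols_indep:
  assumes "gen_pos n (V :: nat \<Rightarrow> real^'r)" "CARD('r) \<le> n" "S \<subseteq> {..<n}" "card S \<le> CARD('r)"
  shows "cols_indep V S"
proof -
  obtain T where T: "S \<subseteq> T" "T \<subseteq> {..<n}" "card T = CARD('r)"
    using exists_superset_with_card[of "{..<n}" S "CARD('r)"] assms(2-4) by auto
  then have "cols_indep V T" using assms(1) unfolding gen_pos_def by blast
  then show ?thesis using T cols_indep_subset finite_subset by blast
qed

lemma gen_pos_spans:
  assumes "gen_pos n (V :: nat \<Rightarrow> real^'r)" "T \<subseteq> {..<n}" "CARD('r) \<le> card T"
  obtains c where "w = (\<Sum>i\<in>T. c i *\<^sub>R V i)"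
proof -
  obtain T' where T': "T' \<subseteq> T" "card T' = CARD('r)" "finite T'"
    using obtain_subset_with_card_n[OF assms(3)] by metis
  define e where "e = (col_enum T' :: 'r \<Rightarrow> nat)"
  have e: "bij_betw e UNIV T'" unfolding e_def using col_enum_bij T' by blast
  then have inj: "inj e" and T'e: "T' = range e" by (auto simp: bij_betw_def)
  have "cols_indep V T'" using assms(1,2) T' unfolding gen_pos_def by auto
  then have "det (col_matrix V e) \<noteq> 0" using cols_indep_iff_det[OF e] by blast
  then obtain x where x: "col_matrix V e *v x = w" using cramer by blast
  let ?c = "\<lambda>i. if i \<in> T' then x $ inv e i else 0"
  have "(\<Sum>i\<in>T. ?c i *\<^sub>R V i) = (\<Sum>i\<in>T'. x $ inv e i *\<^sub>R V i)"
    using T'(1) assms(2) finite_subset by (intro sum.mono_neutral_cong_right) auto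
  also have "\<dots> = w"
    unfolding T'e x[symmetric] col_matrix_mult_vector by (simp add: sum.reindex[OF inj] inv_f_f[OF inj])
  finally show ?thesis by (rule that[OF sym])
qed

section \<open>Dependencies, sign vectors and circuits\<close>

definition dependency :: "nat \<Rightarrow> (nat \<Rightarrow> real^'r) \<Rightarrow> (nat \<Rightarrow> real) \<Rightarrow> bool" where
  "dependency n V lam \<longleftrightarrow> (\<Sum>i<n. lam i *\<^sub>R V i) = 0"

definition supp :: "nat \<Rightarrow> (nat \<Rightarrow> real) \<Rightarrow> nat set" where
  "supp n lam = {i. i < n \<and> lam i \<noteq> 0}"

definition sign_vec :: "nat \<Rightarrow> (nat \<Rightarrow> real) \<Rightarrow> nat \<Rightarrow> real" where
  "sign_vec n lam = (\<lambda>i. if i < n then sgn (lam i) else 0)"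

definition sign_vectors :: "nat \<Rightarrow> (nat \<Rightarrow> real) set" where
  "sign_vectors n = {F. (\<forall>i<n. F i \<in> {-1, 0, 1}) \<and> (\<forall>i\<ge>n. F i = 0)}"

definition conforms :: "nat \<Rightarrow> (nat \<Rightarrow> real) \<Rightarrow> (nat \<Rightarrow> real) \<Rightarrow> bool" where
  "conforms n lam F \<longleftrightarrow> (\<forall>i<n. lam i \<noteq> 0 \<longrightarrow> F i = sgn (lam i))"

definition circuit :: "nat \<Rightarrow> (nat \<Rightarrow> real^'r) \<Rightarrow> (nat \<Rightarrow> real) \<Rightarrow> bool" where
  "circuit n V c \<longleftrightarrow> dependency n V c \<and> card (supp n c) = CARD('r) + 1"

lemma dep_patterns_iff:
  "F \<in> dep_patterns n V \<longleftrightarrow> (\<exists>lam. supp n lam \<noteq> {} \<and> dependency n V lam \<and> F = sign_vec n lam)"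
  unfolding dep_patterns_def dependency_def supp_def sign_vec_def by auto

lemma supp_subset: "supp n lam \<subseteq> {..<n}"
  unfolding supp_def by auto

lemma finite_supp [simp]: "finite (supp n lam)"
  using supp_subset finite_subset by blast

lemma supp_sign_vec_eq:
  assumes "sign_vec n mu = sign_vec n lam"
  shows "supp n mu = supp n lam"
  using assms unfolding supp_def sign_vec_def fun_eq_iff by (metis sgn_zero_iff)

lemma conforms_sign_vec_eq:
  assumes "sign_vec n mu = sign_vec n lam"
  shows "conforms n mu F \<longleftrightarrow> conforms n lam F"
  using assms unfolding conforms_def sign_vec_def fun_eq_iff by (metis sgn_zero_iff)

lemma dependency_add_scaled:
  assumes "dependency n V a" "dependency n V b"
  shows "dependency n V (\<lambda>i. a i + c * b i)"
proof -
  have "(\<Sum>i<n. (a i + c * b i) *\<^sub>R V i) = (\<Sum>i<n. a i *\<^sub>R V i) + c *\<^sub>R (\<Sum>i<n. b i *\<^sub>R V i)"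
    by (simp add: scaleR_add_left sum.distrib scaleR_sum_right)
  then show ?thesis using assms unfolding dependency_def by simp
qed

lemma dependency_scale: "dependency n V k \<Longrightarrow> dependency n V (\<lambda>i. c * k i)"
  using dependency_add_scaled[of n V "\<lambda>i. 0" k c] by (simp add: dependency_def)

lemma dependency_cong:
  assumes "\<forall>i<n. V i = W i"
  shows "dependency n V lam \<longleftrightarrow> dependency n W lam"
  using assms unfolding dependency_def by (metis (no_types, lifting) lessThan_iff sum.cong)

lemma dep_patterns_cong:
  assumes "\<forall>i<n. V i = W i"
  shows "dep_patterns n V = dep_patterns n W"
  by (rule set_eqI) (simp add: dep_patterns_iff dependency_cong[OF assms])

lemma sign_vec_in_sign_vectors: "sign_vec n lam \<in> sign_vectors n"
  by (auto simp: sign_vec_def sign_vectors_def sgn_if)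

lemma finite_sign_vectors: "finite (sign_vectors n)"
proof (induction n)
  case 0
  have "sign_vectors 0 = {\<lambda>i. 0}" unfolding sign_vectors_def by auto
  then show ?case by simp
next
  case (Suc n)
  have "sign_vectors (Suc n) \<subseteq> (\<lambda>(F, v). F(n := v)) ` (sign_vectors n \<times> {-1, 0, 1})"
  proof
    fix F assume F: "F \<in> sign_vectors (Suc n)"
    then have "(F(n := 0), F n) \<in> sign_vectors n \<times> {-1, 0, 1}"
      unfolding sign_vectors_def by (auto simp: less_Suc_eq)
    then show "F \<in> (\<lambda>(F, v). F(n := v)) ` (sign_vectors n \<times> {-1, 0, 1})"
      by (rule rev_image_eqI) simp
  qed
  then show ?case using Suc.IH by (auto intro: finite_subset)
qed

lemma dep_patterns_subset_sign_vectors: "dep_patterns n V \<subseteq> sign_vectors n"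
  by (auto simp: dep_patterns_iff sign_vec_in_sign_vectors)

lemma finite_dep_patterns: "finite (dep_patterns n V)"
  using finite_subset[OF dep_patterns_subset_sign_vectors finite_sign_vectors] .

lemma card_supp_dependency:
  assumes "gen_pos n (V :: nat \<Rightarrow> real^'r)" "CARD('r) \<le> n"
    and "dependency n V lam" "supp n lam \<noteq> {}"
  shows "CARD('r) + 1 \<le> card (supp n lam)"
proof (rule ccontr)
  assume "\<not> ?thesis"
  then have "cols_indep V (supp n lam)"
    using gen_pos_cols_indep[OF assms(1,2) supp_subset] by simp
  then have "\<forall>i\<in>supp n lam. lam i = 0"
    using cols_indep_sum_zero[OF _ supp_subset] assms(3) unfolding dependency_def supp_def by blast
  then show False using assms(4) by (auto simp: supp_def)
qed

lemma dep_patterns_empty: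
  assumes "gen_pos n (V :: nat \<Rightarrow> real^'r)" "CARD('r) = n"
  shows "dep_patterns n V = {}"
proof -
  have "\<not> (dependency n V lam \<and> supp n lam \<noteq> {})" for lam
  proof
    assume "dependency n V lam \<and> supp n lam \<noteq> {}"
    then have "n + 1 \<le> card (supp n lam)"
      using card_supp_dependency[OF assms(1)] assms(2) by auto
    moreover have "card (supp n lam) \<le> n"
      using card_mono[OF _ supp_subset] by simp
    ultimately show False by simp
  qed
  then show ?thesis by (auto simp: dep_patterns_iff)
qed

lemma sgn_add_abs_less:
  fixes a b :: real
  assumes "\<bar>b\<bar> < \<bar>a\<bar>"
  shows "sgn (a + b) = sgn a"
  using assms by (auto simp: sgn_if abs_less_iff split: if_splits)

lemma sgn_eq_if_mult_pos:
  fixes a b :: real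
  assumes "a * b > 0"
  shows "sgn a = sgn b"
  using assms by (auto simp: sgn_if zero_less_mult_iff)

lemma small_perturbation_keeps_signs:
  fixes lam nu :: "'a \<Rightarrow> real"
  assumes "finite T" "\<forall>i\<in>T. lam i \<noteq> 0"
  obtains eps where "eps > 0" "\<forall>i\<in>T. sgn (lam i + eps * nu i) = sgn (lam i)"
proof -
  define eps where "eps = Min (insert 1 ((\<lambda>i. \<bar>lam i\<bar> / (\<bar>nu i\<bar> + 1)) ` T))"
  have "0 < \<bar>lam i\<bar> / (\<bar>nu i\<bar> + 1)" if "i \<in> T" for i
    using assms(2) that by (intro divide_pos_pos) auto
  then have eps_pos: "eps > 0"
    unfolding eps_def using assms(1) by (simp add: Min_gr_iff)
  have "sgn (lam i + eps * nu i) = sgn (lam i)" if "i \<in> T" for i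
  proof (rule sgn_add_abs_less)
    have "eps \<le> \<bar>lam i\<bar> / (\<bar>nu i\<bar> + 1)"
      unfolding eps_def using assms(1) that by (intro Min_le) auto
    then have "eps * (\<bar>nu i\<bar> + 1) \<le> \<bar>lam i\<bar>"
      by (simp add: le_divide_eq add_pos_nonneg)
    then show "\<bar>eps * nu i\<bar> < \<bar>lam i\<bar>"
      using eps_pos by (simp add: abs_mult algebra_simps)
  qed
  then show ?thesis using that eps_pos by blast
qed

lemma conformal_elimination:
  fixes lam nu :: "'a \<Rightarrow> real"
  assumes fin: "finite {i. nu i \<noteq> 0}" and supp: "\<forall>i. nu i \<noteq> 0 \<longrightarrow> lam i \<noteq> 0"
    and pos: "nu c * lam c > 0"
  obtains th i0 where "\<forall>i. lam i + th * nu i \<noteq> 0 \<longrightarrow> sgn (lam i + th * nu i) = sgn (lam i)"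
    "lam i0 \<noteq> 0" "lam i0 + th * nu i0 = 0"
proof -
  define K where "K = {i. nu i * lam i > 0}"
  have "finite K" using fin by (rule finite_subset[rotated]) (auto simp: K_def)
  define t where "t = Min ((\<lambda>i. lam i / nu i) ` K)"
  have "c \<in> K" using pos by (simp add: K_def)
  then obtain i0 where i0: "i0 \<in> K" "t = lam i0 / nu i0"
    using Min_in[of "(\<lambda>i. lam i / nu i) ` K"] \<open>finite K\<close> unfolding t_def by blast
  then have t_pos: "t > 0"
    by (auto simp: K_def zero_less_divide_iff zero_less_mult_iff)
  have bound: "t * (nu i * lam i) \<le> lam i * lam i" for i
  proof (cases "i \<in> K")
    case True
    then have "t \<le> lam i / nu i" and pi: "nu i * lam i > 0"
      unfolding t_def using \<open>finite K\<close> by (auto simp: K_def)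
    then have "t * (nu i * lam i) \<le> lam i / nu i * (nu i * lam i)"
      by (intro mult_right_mono) auto
    also have "\<dots> = lam i * lam i" using pi by auto
    finally show ?thesis .
  next
    case False
    then have "t * (nu i * lam i) \<le> 0"
      using t_pos by (simp add: K_def mult_nonneg_nonpos)
    then show ?thesis using zero_le_square[of "lam i"] by linarith
  qed
  have conf: "(lam i - t * nu i) * lam i \<ge> 0" for i
    using bound[of i] by (simp add: algebra_simps)
  have "sgn (lam i + (- t) * nu i) = sgn (lam i)" if "lam i + (- t) * nu i \<noteq> 0" for i
  proof -
    have "lam i \<noteq> 0" using that supp by force
    then have "(lam i - t * nu i) * lam i > 0"
      using conf[of i] that by (simp add: order_le_less zero_less_mult_iff)
    then show ?thesis using sgn_eq_if_mult_pos by simp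
  qed
  moreover have "lam i0 + (- t) * nu i0 = 0" "lam i0 \<noteq> 0"
    using i0 by (auto simp: K_def)
  ultimately show ?thesis using that by blast
qed

lemma dependency_extension:
  assumes gp: "gen_pos n (V :: nat \<Rightarrow> real^'r)"
    and T: "T \<subseteq> {..<n}" "CARD('r) \<le> card T" and U: "U \<subseteq> {..<n}" "T \<inter> U = {}"
  obtains nu where "dependency n V nu" "\<forall>i\<in>U. nu i = f i" "\<forall>i. i \<notin> T \<union> U \<longrightarrow> nu i = 0"
proof -
  obtain c where c: "(\<Sum>j\<in>U. f j *\<^sub>R V j) = (\<Sum>i\<in>T. c i *\<^sub>R V i)"
    using gen_pos_spans[OF gp T, where w = "\<Sum>j\<in>U. f j *\<^sub>R V j"] by blast
  define nu where "nu i = (if i \<in> U then f i else if i \<in> T then - c i else 0)" for i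
  have fin: "finite T" "finite U"
    using T(1) U(1) by (auto intro: finite_subset[OF _ finite_lessThan])
  have "(\<Sum>i<n. nu i *\<^sub>R V i) = (\<Sum>i\<in>T \<union> U. nu i *\<^sub>R V i)"
    using T U by (intro sum.mono_neutral_right) (auto simp: nu_def)
  also have "\<dots> = (\<Sum>i\<in>T. (- c i) *\<^sub>R V i) + (\<Sum>i\<in>U. f i *\<^sub>R V i)"
    using fin U(2) by (simp add: sum.union_disjoint nu_def disjoint_iff cong: sum.cong)
  also have "\<dots> = 0" unfolding c by (simp add: sum_negf)
  finally have "dependency n V nu" unfolding dependency_def .
  then show ?thesis using that by (auto simp: nu_def)
qed

lemma sign_vec_conformal_perturbation:
  assumes F: "F \<in> sign_vectors n" "conforms n lam F" and eps: "eps > 0"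
    and keep: "\<forall>i<n. lam i \<noteq> 0 \<longrightarrow> sgn (lam i + eps * nu i) = sgn (lam i)"
    and fill: "\<forall>i<n. lam i = 0 \<longrightarrow> nu i = F i"
  shows "sign_vec n (\<lambda>i. lam i + eps * nu i) = F"
proof
  fix i
  show "sign_vec n (\<lambda>i. lam i + eps * nu i) i = F i"
  proof (cases "i < n \<and> lam i = 0")
    case True
    then have "F i \<in> {-1, 0, 1}" "nu i = F i" using F(1) fill by (auto simp: sign_vectors_def)
    then show ?thesis using True eps by (auto simp: sign_vec_def sgn_mult)
  next
    case False
    then show ?thesis using F keep by (auto simp: sign_vec_def sign_vectors_def conforms_def)
  qed
qed

lemma dep_patterns_upward_closed:
  assumes gp: "gen_pos n (V :: nat \<Rightarrow> real^'r)" "CARD('r) \<le> n"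
    and lam: "dependency n V lam" "supp n lam \<noteq> {}"
    and F: "F \<in> sign_vectors n" "conforms n lam F"
  shows "F \<in> dep_patterns n V"
proof -
  define U where "U = {i. i < n \<and> lam i = 0}"
  have "CARD('r) \<le> card (supp n lam)" using card_supp_dependency[OF gp lam] by simp
  moreover have "U \<subseteq> {..<n}" "supp n lam \<inter> U = {}" by (auto simp: supp_def U_def)
  ultimately obtain nu where nu: "dependency n V nu" "\<forall>i\<in>U. nu i = F i"
    using dependency_extension[OF gp(1) supp_subset, of lam U F] by blast
  have "finite (supp n lam)" "\<forall>i\<in>supp n lam. lam i \<noteq> 0" by (auto simp: supp_def)
  then obtain eps where eps: "eps > 0" "\<forall>i\<in>supp n lam. sgn (lam i + eps * nu i) = sgn (lam i)"
    by (rule small_perturbation_keeps_signs)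
  define mu where "mu i = lam i + eps * nu i" for i
  have "dependency n V mu" unfolding mu_def by (rule dependency_add_scaled[OF lam(1) nu(1)])
  moreover have "F = sign_vec n mu"
    unfolding mu_def using eps nu(2) by (intro sign_vec_conformal_perturbation[OF F, symmetric])
      (auto simp: supp_def U_def)
  moreover have "supp n mu \<noteq> {}"
  proof -
    obtain i where i: "i \<in> supp n lam" using lam(2) by blast
    then have "sgn (mu i) \<noteq> 0" using eps(2) by (simp add: mu_def supp_def sgn_zero_iff)
    then show ?thesis using i by (auto simp: supp_def)
  qed
  ultimately show ?thesis unfolding dep_patterns_iff by blast
qed

lemma conforms_sign_vec_self: "conforms n lam (sign_vec n lam)"
  by (simp add: conforms_def sign_vec_def)

lemma conforms_sign_vec_trans:
  assumes "conforms n mu (sign_vec n lam)" "conforms n c (sign_vec n mu)"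
  shows "conforms n c (sign_vec n lam)"
  using assms unfolding conforms_def sign_vec_def by (metis sgn_zero_iff)

lemma circuit_supp_nonempty: "circuit n V c \<Longrightarrow> supp n c \<noteq> {}"
  unfolding circuit_def by auto

lemma dependency_supported_on:
  assumes gp: "gen_pos n (V :: nat \<Rightarrow> real^'r)"
    and S: "S \<subseteq> {..<n}" "card S = CARD('r) + 1" and c: "c \<in> S"
  obtains nu where "dependency n V nu" "nu c = v" "\<forall>i. i \<notin> S \<longrightarrow> nu i = 0"
proof -
  have "S - {c} \<subseteq> {..<n}" "CARD('r) \<le> card (S - {c})" "{c} \<subseteq> {..<n}" "(S - {c}) \<inter> {c} = {}"
    using S c finite_subset[OF S(1)] by auto
  then obtain nu where "dependency n V nu" "\<forall>i\<in>{c}. nu i = v" "\<forall>i. i \<notin> (S - {c}) \<union> {c} \<longrightarrow> nu i = 0"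
    by (rule dependency_extension[OF gp])
  then have "dependency n V nu" "nu c = v" "\<forall>i. i \<notin> S \<longrightarrow> nu i = 0" using c by auto
  then show ?thesis by (rule that)
qed

lemma smaller_conformal_dependency:
  assumes gp: "gen_pos n (V :: nat \<Rightarrow> real^'r)"
    and lam: "dependency n V lam" and big: "CARD('r) + 1 < card (supp n lam)"
  obtains mu where "dependency n V mu" "supp n mu \<noteq> {}" "card (supp n mu) < card (supp n lam)"
    "conforms n mu (sign_vec n lam)"
proof -
  obtain S where S: "S \<subseteq> supp n lam" "card S = CARD('r) + 1"
    using obtain_subset_with_card_n[of "CARD('r) + 1" "supp n lam"] big by auto
  then have "S \<noteq> {}" by auto
  then obtain c0 where c0: "c0 \<in> S" by blast
  have Sn: "S \<subseteq> {..<n}" using S(1) supp_subset by blast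
  have fS: "finite S" using S(1) by (rule finite_subset) simp
  obtain nu where nu: "dependency n V nu" "nu c0 = sgn (lam c0)" "\<forall>i. i \<notin> S \<longrightarrow> nu i = 0"
    using dependency_supported_on[OF gp Sn S(2) c0] by metis
  have "lam c0 \<noteq> 0" using c0 S(1) by (auto simp: supp_def)
  then have "nu c0 * lam c0 > 0" using nu(2) by (auto simp: sgn_if)
  moreover have "finite {i. nu i \<noteq> 0}" using nu(3) fS by (auto intro: finite_subset)
  moreover have nu_lam: "\<forall>i. nu i \<noteq> 0 \<longrightarrow> i \<in> supp n lam" using nu(3) S(1) by auto
  ultimately obtain th i0 where th:
      "\<forall>i. lam i + th * nu i \<noteq> 0 \<longrightarrow> sgn (lam i + th * nu i) = sgn (lam i)"
      "lam i0 \<noteq> 0" "lam i0 + th * nu i0 = 0"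
    using conformal_elimination[of nu lam c0] unfolding supp_def by blast
  define mu where "mu i = lam i + th * nu i" for i
  have "supp n mu \<subseteq> supp n lam - {i0}"
    using th by (auto simp: supp_def mu_def sgn_zero_iff)
  moreover have "i0 \<in> supp n lam" using nu_lam th(2,3) by force
  ultimately have "supp n mu \<subset> supp n lam" by blast
  then have "card (supp n mu) < card (supp n lam)" by (rule psubset_card_mono[OF finite_supp])
  moreover have "supp n mu \<noteq> {}"
  proof -
    have "\<not> supp n lam \<subseteq> S" using card_mono[OF fS, of "supp n lam"] S(2) big by linarith
    then obtain j where "j \<in> supp n lam" "j \<notin> S" by blast
    then show ?thesis using nu(3) by (auto simp: supp_def mu_def)
  qed
  moreover have "conforms n mu (sign_vec n lam)"
    using th(1) by (simp add: conforms_def sign_vec_def mu_def)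
  moreover have "dependency n V mu"
    unfolding mu_def by (rule dependency_add_scaled[OF lam nu(1)])
  ultimately show ?thesis using that by blast
qed

lemma conformal_circuit_exists:
  assumes gp: "gen_pos n (V :: nat \<Rightarrow> real^'r)" "CARD('r) \<le> n"
  shows "dependency n V lam \<Longrightarrow> supp n lam \<noteq> {} \<Longrightarrow>
    \<exists>c. circuit n V c \<and> conforms n c (sign_vec n lam)"
proof (induction "card (supp n lam)" arbitrary: lam rule: less_induct)
  case less
  show ?case
  proof (cases "card (supp n lam) = CARD('r) + 1")
    case True
    then show ?thesis using less.prems(1) conforms_sign_vec_self unfolding circuit_def by blast
  next
    case False
    then have "CARD('r) + 1 < card (supp n lam)"
      using card_supp_dependency[OF gp less.prems] by simp
    then obtain mu where mu: "dependency n V mu" "supp n mu \<noteq> {}"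
        "card (supp n mu) < card (supp n lam)" "conforms n mu (sign_vec n lam)"
      using smaller_conformal_dependency[OF gp(1) less.prems(1)] by blast
    then obtain c where "circuit n V c" "conforms n c (sign_vec n mu)"
      using less.hyps by blast
    then show ?thesis using conforms_sign_vec_trans[OF mu(4)] by blast
  qed
qed

lemma dep_patterns_iff_conformal_circuit:
  assumes "gen_pos n (V :: nat \<Rightarrow> real^'r)" "CARD('r) \<le> n"
  shows "F \<in> dep_patterns n V \<longleftrightarrow> F \<in> sign_vectors n \<and> (\<exists>c. circuit n V c \<and> conforms n c F)"
proof
  assume "F \<in> dep_patterns n V"
  then obtain lam where "supp n lam \<noteq> {}" "dependency n V lam" "F = sign_vec n lam"
    unfolding dep_patterns_iff by blast
  then show "F \<in> sign_vectors n \<and> (\<exists>c. circuit n V c \<and> conforms n c F)"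
    using conformal_circuit_exists[OF assms] sign_vec_in_sign_vectors by blast
next
  assume "F \<in> sign_vectors n \<and> (\<exists>c. circuit n V c \<and> conforms n c F)"
  then show "F \<in> dep_patterns n V"
    using dep_patterns_upward_closed[OF assms] circuit_supp_nonempty unfolding circuit_def by blast
qed

lemma dependency_proportional:
  assumes indep: "cols_indep V (S - {b})" and S: "S \<subseteq> {..<n}" "b \<in> S"
    and lam: "dependency n V lam" "\<forall>i<n. i \<notin> S \<longrightarrow> lam i = 0"
    and k: "dependency n V k" "\<forall>i<n. i \<notin> S \<longrightarrow> k i = 0" "k b \<noteq> 0"
  shows "\<forall>i<n. lam i = lam b / k b * k i"
proof -
  define d where "d i = lam i + (- (lam b / k b)) * k i" for i
  have "dependency n V d" unfolding d_def by (rule dependency_add_scaled[OF lam(1) k(1)])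
  moreover have "\<forall>i<n. i \<notin> S - {b} \<longrightarrow> d i = 0" using lam(2) k(2,3) by (auto simp: d_def)
  ultimately have "\<forall>i\<in>S - {b}. d i = 0"
    using cols_indep_sum_zero[OF indep] S(1) unfolding dependency_def by blast
  moreover have "d b = 0" "\<forall>i<n. i \<notin> S \<longrightarrow> d i = 0"
    using lam(2) k(2,3) by (auto simp: d_def)
  ultimately have "d i = 0" if "i < n" for i
    using that by (cases "i \<in> S - {b}") auto
  then show ?thesis by (simp add: d_def)
qed

lemma covector_not_conformal:
  assumes F: "F \<in> covectors n V" and lam: "dependency n V lam" "supp n lam \<noteq> {}"
  shows "\<not> conforms n lam F"
proof
  assume conf: "conforms n lam F"
  obtain u where u: "F = (\<lambda>i. if i < n then sgn (V i \<bullet> u) else 0)"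
    using F unfolding covectors_def by blast
  have pos: "lam i * (V i \<bullet> u) > 0" if "i < n" "lam i \<noteq> 0" for i
  proof -
    have "sgn (V i \<bullet> u) = sgn (lam i)" using conf that u by (simp add: conforms_def)
    then show ?thesis using that by (auto simp: sgn_if zero_less_mult_iff split: if_splits)
  qed
  obtain i where "i < n" "lam i \<noteq> 0" using lam(2) by (auto simp: supp_def)
  then have "(\<Sum>i<n. lam i * (V i \<bullet> u)) > 0"
    using pos by (intro sum_pos2[of "{..<n}" i]) (auto simp: le_less)
  moreover have "(\<Sum>i<n. lam i * (V i \<bullet> u)) = (\<Sum>i<n. lam i *\<^sub>R V i) \<bullet> u"
    by (simp add: inner_sum_left)
  ultimately show False using lam(1) by (simp add: dependency_def)
qed

lemma covectors_uminus:
  assumes "F \<in> covectors n V"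
  shows "- F \<in> covectors n V"
proof -
  obtain u where "u \<noteq> 0" "F = (\<lambda>i. if i < n then sgn (V i \<bullet> u) else 0)"
    using assms unfolding covectors_def by blast
  then have "- u \<noteq> 0" "- F = (\<lambda>i. if i < n then sgn (V i \<bullet> - u) else 0)"
    by (auto simp: fun_eq_iff)
  then show ?thesis unfolding covectors_def by blast
qed

section \<open>Circuit signatures and the sign vectors they create\<close>

definition full_sign_vectors :: "nat \<Rightarrow> (nat \<Rightarrow> real) set" where
  "full_sign_vectors n = {Z. (\<forall>i<n. Z i \<in> {-1, 1}) \<and> (\<forall>i\<ge>n. Z i = 0)}"

definition flip_outside :: "nat set \<Rightarrow> (nat \<Rightarrow> real) \<Rightarrow> nat \<Rightarrow> real" where
  "flip_outside R Z = (\<lambda>i. if i \<in> R then Z i else - Z i)"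

definition has_circuit_signs :: "nat \<Rightarrow> (nat \<Rightarrow> real^'r) \<Rightarrow> nat set \<Rightarrow> (nat \<Rightarrow> real) \<Rightarrow> bool" where
  "has_circuit_signs n X R Z \<longleftrightarrow> (\<forall>a<n. a \<notin> R \<longrightarrow> (\<exists>k. dependency n X k \<and>
      (\<forall>i<n. i \<notin> insert a R \<longrightarrow> k i = 0) \<and> (\<forall>i\<in>insert a R. sgn (k i) = Z i)))"

definition patterns_below :: "nat set \<Rightarrow> nat \<Rightarrow> (nat \<Rightarrow> real) \<Rightarrow> (nat \<Rightarrow> real) set" where
  "patterns_below R n Z = {F. (\<forall>i\<in>R. F i = Z i) \<and> (\<forall>i<n. i \<notin> R \<longrightarrow> F i = 0 \<or> F i = Z i) \<and>
     (\<forall>i\<ge>n. F i = 0) \<and> (\<exists>i<n. i \<notin> R \<and> F i \<noteq> 0)}"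

lemma flip_outside_flip_outside [simp]: "flip_outside R (flip_outside R Z) = Z"
  by (simp add: flip_outside_def fun_eq_iff)

lemma flip_outside_full: "Z \<in> full_sign_vectors n \<Longrightarrow> flip_outside R Z \<in> full_sign_vectors n"
  by (auto simp: full_sign_vectors_def flip_outside_def)

lemma uminus_full: "Z \<in> full_sign_vectors n \<Longrightarrow> - Z \<in> full_sign_vectors n"
  by (auto simp: full_sign_vectors_def)

lemma full_sign_vectors_nonzero: "Z \<in> full_sign_vectors n \<Longrightarrow> i < n \<Longrightarrow> Z i \<noteq> 0"
  by (auto simp: full_sign_vectors_def)

lemma has_circuit_signs_uminus:
  assumes "has_circuit_signs n X R Z"
  shows "has_circuit_signs n X R (- Z)"
  unfolding has_circuit_signs_def
proof (intro allI impI)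
  fix a assume "a < n" "a \<notin> R"
  then obtain k where "dependency n X k" "\<forall>i<n. i \<notin> insert a R \<longrightarrow> k i = 0"
      "\<forall>i\<in>insert a R. sgn (k i) = Z i"
    using assms unfolding has_circuit_signs_def by blast
  then show "\<exists>k. dependency n X k \<and> (\<forall>i<n. i \<notin> insert a R \<longrightarrow> k i = 0) \<and>
      (\<forall>i\<in>insert a R. sgn (k i) = (- Z) i)"
    using dependency_scale[of n X k "-1"] by (intro exI[of _ "\<lambda>i. -1 * k i"]) (auto simp: sgn_minus)
qed

lemma gen_pos_inner_solvable:
  assumes gp: "gen_pos n (X :: nat \<Rightarrow> real^'r)" and R: "R \<subseteq> {..<n}" "card R = CARD('r)"
  obtains u where "\<forall>i\<in>R. X i \<bullet> u = z i"
proof -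
  have "finite R" using R(1) finite_subset by blast
  define e where "e = (col_enum R :: 'r \<Rightarrow> nat)"
  have e: "bij_betw e UNIV R" unfolding e_def using col_enum_bij \<open>finite R\<close> R(2) by blast
  have "cols_indep X R" using gp R unfolding gen_pos_def by blast
  then have "det (transpose (col_matrix X e)) \<noteq> 0"
    using cols_indep_iff_det[OF e] by (simp add: det_transpose)
  then obtain u where u: "transpose (col_matrix X e) *v u = (\<chi> j. z (e j))"
    using cramer by blast
  have "X i \<bullet> u = z i" if "i \<in> R" for i
  proof -
    have "i \<in> range e" using e that by (simp add: bij_betw_def)
    then obtain j where j: "i = e j" by blast
    have "(transpose (col_matrix X e) *v u) $ j = X (e j) \<bullet> u"
      by (simp add: matrix_vector_mult_def transpose_def col_matrix_def inner_vec_def)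
    then show ?thesis using u j by simp
  qed
  then show ?thesis using that by blast
qed

lemma flip_outside_covector:
  assumes gp: "gen_pos n (X :: nat \<Rightarrow> real^'r)" and R: "R \<subseteq> {..<n}" "card R = CARD('r)"
    and Z: "Z \<in> full_sign_vectors n" and H: "has_circuit_signs n X R Z"
  shows "flip_outside R Z \<in> covectors n X"
proof -
  obtain u where u: "\<forall>i\<in>R. X i \<bullet> u = Z i" using gen_pos_inner_solvable[OF gp R] by blast
  have fR: "finite R" using R(1) finite_subset by blast
  have "R \<noteq> {}" using R(2) by auto
  then obtain i0 where i0: "i0 \<in> R" by blast
  have ZR: "Z i \<noteq> 0" if "i \<in> R" for i using full_sign_vectors_nonzero[OF Z] R(1) that by auto
  have outside: "sgn (X a \<bullet> u) = - Z a" if a: "a < n" "a \<notin> R" for a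
  proof -
    obtain k where k: "dependency n X k" "\<forall>i<n. i \<notin> insert a R \<longrightarrow> k i = 0"
        "\<forall>i\<in>insert a R. sgn (k i) = Z i"
      using H a unfolding has_circuit_signs_def by blast
    have "0 = (\<Sum>i<n. k i *\<^sub>R X i) \<bullet> u" using k(1) by (simp add: dependency_def)
    also have "\<dots> = (\<Sum>i<n. k i * (X i \<bullet> u))" by (simp add: inner_sum_left)
    also have "\<dots> = (\<Sum>i\<in>insert a R. k i * (X i \<bullet> u))"
      using k(2) R(1) a by (intro sum.mono_neutral_right) auto
    also have "\<dots> = k a * (X a \<bullet> u) + (\<Sum>i\<in>R. \<bar>k i\<bar>)"
      using a fR u k(3) by (simp add: abs_sgn)
    finally have "k a * (X a \<bullet> u) = - (\<Sum>i\<in>R. \<bar>k i\<bar>)" by simp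
    moreover have "(\<Sum>i\<in>R. \<bar>k i\<bar>) > 0"
      using k(3) ZR i0 fR by (intro sum_pos2[of R i0]) (auto simp: sgn_zero_iff)
    ultimately have "k a * (X a \<bullet> u) < 0" by simp
    then show ?thesis
      using k(3) full_sign_vectors_nonzero[OF Z a(1)]
      by (auto simp: sgn_if mult_less_0_iff split: if_splits)
  qed
  have "flip_outside R Z = (\<lambda>i. if i < n then sgn (X i \<bullet> u) else 0)"
  proof
    fix i show "flip_outside R Z i = (if i < n then sgn (X i \<bullet> u) else 0)"
      using u outside Z R(1) unfolding full_sign_vectors_def flip_outside_def
      by (cases "i < n"; cases "i \<in> R") (auto simp: sgn_if)
  qed
  moreover have "u \<noteq> 0" using u i0 ZR by auto
  ultimately show ?thesis unfolding covectors_def by blast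
qed

lemma dep_patterns_by_circuit_signs:
  assumes gp: "gen_pos n (X :: nat \<Rightarrow> real^'r)" "CARD('r) \<le> n"
    and H: "has_circuit_signs n X R Z" and Z: "Z \<in> full_sign_vectors n"
    and F: "F \<in> sign_vectors n" and a: "a < n" "a \<notin> R" and s: "s = 1 \<or> s = -1"
    and FZ: "\<forall>i\<in>insert a R. F i = s * Z i"
  shows "F \<in> dep_patterns n X"
proof -
  obtain k where k: "dependency n X k" "\<forall>i<n. i \<notin> insert a R \<longrightarrow> k i = 0"
      "\<forall>i\<in>insert a R. sgn (k i) = Z i"
    using H a unfolding has_circuit_signs_def by blast
  have "k a \<noteq> 0" using k(3) full_sign_vectors_nonzero[OF Z a(1)] by auto
  then have "supp n (\<lambda>i. s * k i) \<noteq> {}" using a s by (auto simp: supp_def)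
  moreover have "conforms n (\<lambda>i. s * k i) F"
    using FZ k(2,3) s by (auto simp: conforms_def sgn_mult)
  ultimately show ?thesis
    using dep_patterns_upward_closed[OF gp dependency_scale[OF k(1)] _ F] by blast
qed

lemma patterns_below_sign_vectors:
  assumes "Z \<in> full_sign_vectors n" "F \<in> patterns_below R n Z"
  shows "F \<in> sign_vectors n"
proof -
  have "F i \<in> {-1, 0, 1}" if "i < n" for i
  proof -
    have "Z i \<in> {-1, 1}" "F i = 0 \<or> F i = Z i"
      using assms that unfolding patterns_below_def full_sign_vectors_def by (cases "i \<in> R", auto)
    then show ?thesis by auto
  qed
  then show ?thesis using assms(2) unfolding patterns_below_def sign_vectors_def by auto
qed

lemma patterns_below_subset_dep_patterns:
  assumes gp: "gen_pos n (X :: nat \<Rightarrow> real^'r)" "CARD('r) \<le> n"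
    and H: "has_circuit_signs n X R Z" and Z: "Z \<in> full_sign_vectors n"
  shows "patterns_below R n Z \<subseteq> dep_patterns n X"
proof
  fix F assume F: "F \<in> patterns_below R n Z"
  then obtain a where a: "a < n" "a \<notin> R" "F a \<noteq> 0" unfolding patterns_below_def by blast
  then have "\<forall>i\<in>insert a R. F i = 1 * Z i" using F unfolding patterns_below_def by auto
  then show "F \<in> dep_patterns n X"
    using dep_patterns_by_circuit_signs[OF gp H Z patterns_below_sign_vectors[OF Z F] a(1,2), where s = 1]
    by simp
qed

lemma patterns_below_disjoint_dep_patterns:
  assumes "Z \<in> covectors n Y"
  shows "patterns_below R n Z \<inter> dep_patterns n Y = {}"
proof -
  have False if F: "F \<in> patterns_below R n Z" "F \<in> dep_patterns n Y" for F
  proof -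
    obtain lam where lam: "supp n lam \<noteq> {}" "dependency n Y lam" "F = sign_vec n lam"
      using F(2) unfolding dep_patterns_iff by blast
    have "conforms n lam Z"
      unfolding conforms_def
    proof (intro allI impI)
      fix i assume i: "i < n" "lam i \<noteq> 0"
      then have "F i = sgn (lam i)" "F i \<noteq> 0" using lam(3) by (auto simp: sign_vec_def sgn_zero_iff)
      then show "Z i = sgn (lam i)" using F(1) i(1) unfolding patterns_below_def by (cases "i \<in> R") auto
    qed
    then show False using covector_not_conformal[OF assms lam(2,1)] by blast
  qed
  then show ?thesis by blast
qed

lemma circuit_through_signs:
  assumes gp: "gen_pos n (X :: nat \<Rightarrow> real^'r)" and R: "R \<subseteq> {..<n}" "card R = CARD('r)"
    and Z: "Z \<in> full_sign_vectors n" and H: "has_circuit_signs n X R Z"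
    and c: "circuit n X c" "R \<subseteq> supp n c"
  obtains a s where "a < n" "a \<notin> R" "s = 1 \<or> s = -1" "supp n c = insert a R"
    "\<forall>i\<in>insert a R. sgn (c i) = s * Z i"
proof -
  have fR: "finite R" using R(1) finite_subset by blast
  have "card (supp n c - R) = 1" using c R(2) fR by (simp add: circuit_def card_Diff_subset)
  then obtain a where a1: "supp n c - R = {a}" by (rule card_1_singletonE)
  then have suppc: "supp n c = insert a R" and a: "a < n" "a \<notin> R"
    using c(2) by (auto simp: supp_def)
  obtain k where k: "dependency n X k" "\<forall>i<n. i \<notin> insert a R \<longrightarrow> k i = 0"
      "\<forall>i\<in>insert a R. sgn (k i) = Z i"
    using H a unfolding has_circuit_signs_def by blast
  have "R \<noteq> {}" using R(2) by auto
  then obtain b where b: "b \<in> R" by blast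
  have "Z b \<noteq> 0" using full_sign_vectors_nonzero[OF Z] b R(1) by auto
  then have kb: "k b \<noteq> 0" using k(3) b by auto
  have "insert a R - {b} \<subseteq> {..<n}" "card (insert a R - {b}) = CARD('r)"
    using a b R fR by auto
  then have "cols_indep X (insert a R - {b})"
    using gp unfolding gen_pos_def by blast
  moreover have "\<forall>i<n. i \<notin> insert a R \<longrightarrow> c i = 0"
    using suppc unfolding supp_def by blast
  moreover have "insert a R \<subseteq> {..<n}" using a R(1) by auto
  ultimately have c_eq: "\<forall>i<n. c i = c b / k b * k i"
    using dependency_proportional[of X "insert a R" b n c k] b c(1) k(1,2) kb
    unfolding circuit_def by blast
  have "c b \<noteq> 0" using b suppc unfolding supp_def by auto
  then have "c b / k b \<noteq> 0" using kb by simp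
  then have "sgn (c b / k b) = 1 \<or> sgn (c b / k b) = -1" by (simp add: sgn_if)
  moreover have "\<forall>i\<in>insert a R. sgn (c i) = sgn (c b / k b) * Z i"
    using c_eq k(3) a R(1) by (auto simp: sgn_mult)
  ultimately show ?thesis using that[OF a _ suppc] by blast
qed

lemma dep_patterns_diff_subset:
  assumes gpX: "gen_pos n (X :: nat \<Rightarrow> real^'r)" and gpY: "gen_pos n (Y :: nat \<Rightarrow> real^'r)"
    and rn: "CARD('r) \<le> n" and R: "R \<subseteq> {..<n}" "card R = CARD('r)"
    and Z: "Z \<in> full_sign_vectors n"
    and HX: "has_circuit_signs n X R Z" and HY: "has_circuit_signs n Y R (flip_outside R Z)"
    and transport: "\<And>c. circuit n X c \<Longrightarrow> \<not> R \<subseteq> supp n c \<Longrightarrow>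
        \<exists>c'. dependency n Y c' \<and> sign_vec n c' = sign_vec n c"
  shows "dep_patterns n X - dep_patterns n Y \<subseteq> patterns_below R n Z \<union> patterns_below R n (- Z)"
proof
  fix F assume F: "F \<in> dep_patterns n X - dep_patterns n Y"
  then obtain c where F_sv: "F \<in> sign_vectors n" and c: "circuit n X c" "conforms n c F"
    using dep_patterns_iff_conformal_circuit[OF gpX rn] by blast
  have "R \<subseteq> supp n c"
  proof (rule ccontr)
    assume "\<not> R \<subseteq> supp n c"
    then obtain c' where c': "dependency n Y c'" "sign_vec n c' = sign_vec n c"
      using transport c(1) by blast
    then have "circuit n Y c'" "conforms n c' F"
      using c supp_sign_vec_eq[OF c'(2)] conforms_sign_vec_eq[OF c'(2)] unfolding circuit_def by auto
    then show False using F F_sv dep_patterns_iff_conformal_circuit[OF gpY rn] by blast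
  qed
  then obtain a s where as: "a < n" "a \<notin> R" "s = 1 \<or> s = -1" "supp n c = insert a R"
      "\<forall>i\<in>insert a R. sgn (c i) = s * Z i"
    using circuit_through_signs[OF gpX R Z HX c(1)] by blast
  have F_sZ: "F i = s * Z i" if "i \<in> insert a R" for i
    using c(2) as(4,5) that unfolding conforms_def supp_def by auto
  have F_off: "F i = 0 \<or> F i = s * Z i" if i: "i < n" "i \<notin> R" for i
  proof (rule ccontr)
    assume "\<not> (F i = 0 \<or> F i = s * Z i)"
    moreover have "F i \<in> {-1, 0, 1}" "Z i \<in> {-1, 1}"
      using F_sv Z i(1) unfolding sign_vectors_def full_sign_vectors_def by auto
    ultimately have "\<forall>j\<in>insert i R. F j = s * flip_outside R Z j"
      using F_sZ as(3) i(2) by (auto simp: flip_outside_def)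
    then have "F \<in> dep_patterns n Y"
      using dep_patterns_by_circuit_signs[OF gpY rn HY flip_outside_full[OF Z] F_sv i as(3)] by blast
    then show False using F by blast
  qed
  have "Z a \<noteq> 0" "s \<noteq> 0" using full_sign_vectors_nonzero[OF Z as(1)] as(3) by auto
  then have "F \<in> patterns_below R n (\<lambda>i. s * Z i)"
    using F_sZ F_off F_sv as(1,2) unfolding patterns_below_def sign_vectors_def by auto
  then show "F \<in> patterns_below R n Z \<union> patterns_below R n (- Z)"
    using as(3) by (auto simp: fun_Compl_def)
qed

lemma dep_patterns_diff_eq:
  assumes gpX: "gen_pos n (X :: nat \<Rightarrow> real^'r)" and gpY: "gen_pos n (Y :: nat \<Rightarrow> real^'r)"
    and rn: "CARD('r) \<le> n" and R: "R \<subseteq> {..<n}" "card R = CARD('r)"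
    and Z: "Z \<in> full_sign_vectors n"
    and HX: "has_circuit_signs n X R Z" and HY: "has_circuit_signs n Y R (flip_outside R Z)"
    and transport: "\<And>c. circuit n X c \<Longrightarrow> \<not> R \<subseteq> supp n c \<Longrightarrow>
        \<exists>c'. dependency n Y c' \<and> sign_vec n c' = sign_vec n c"
  shows "dep_patterns n X - dep_patterns n Y = patterns_below R n Z \<union> patterns_below R n (- Z)"
proof
  show "dep_patterns n X - dep_patterns n Y \<subseteq> patterns_below R n Z \<union> patterns_below R n (- Z)"
    using dep_patterns_diff_subset[OF assms] .
  have "Z \<in> covectors n Y"
    using flip_outside_covector[OF gpY R flip_outside_full[OF Z] HY] by simp
  then show "patterns_below R n Z \<union> patterns_below R n (- Z) \<subseteq> dep_patterns n X - dep_patterns n Y"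
    using patterns_below_subset_dep_patterns[OF gpX rn HX Z]
      patterns_below_subset_dep_patterns[OF gpX rn has_circuit_signs_uminus[OF HX] uminus_full[OF Z]]
      patterns_below_disjoint_dep_patterns[of Z n Y R]
      patterns_below_disjoint_dep_patterns[OF covectors_uminus, of Z n Y R]
    by blast
qed

lemma circuit_signs_new_covector:
  assumes gpX: "gen_pos n (X :: nat \<Rightarrow> real^'r)" and gpY: "gen_pos n (Y :: nat \<Rightarrow> real^'r)"
    and R: "R \<subseteq> {..<n}" "card R = CARD('r)" and rn: "CARD('r) < n"
    and Z: "Z \<in> full_sign_vectors n"
    and HX: "has_circuit_signs n X R Z" and HY: "has_circuit_signs n Y R (flip_outside R Z)"
  shows "Z \<in> covectors n Y - covectors n X"
proof
  show "Z \<in> covectors n Y"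
    using flip_outside_covector[OF gpY R flip_outside_full[OF Z] HY] by simp
  obtain a where a: "a < n" "a \<notin> R" using exists_index_outside[OF R(1)] R(2) rn by metis
  then obtain k where k: "dependency n X k" "\<forall>i<n. i \<notin> insert a R \<longrightarrow> k i = 0"
      "\<forall>i\<in>insert a R. sgn (k i) = Z i"
    using HX unfolding has_circuit_signs_def by blast
  have "k a \<noteq> 0" using k(3) full_sign_vectors_nonzero[OF Z a(1)] by auto
  then have "supp n k \<noteq> {}" using a(1) by (auto simp: supp_def)
  moreover have "conforms n k Z" using k(2,3) by (auto simp: conforms_def)
  ultimately show "Z \<notin> covectors n X" using covector_not_conformal[OF _ k(1)] by blast
qed

section \<open>Circuits along a mutation path\<close>

text \<open>Cramer's rule: the dependency of the columns \<open>V \<circ> e\<close> and \<open>V b\<close> normalised to \<open>-1\<close> at \<open>b\<close>.\<close>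

definition cramer_dep :: "(nat \<Rightarrow> real^'r) \<Rightarrow> ('r \<Rightarrow> nat) \<Rightarrow> nat \<Rightarrow> nat \<Rightarrow> real" where
  "cramer_dep V e b i = (if i = b then -1 else if i \<in> range e
      then det (col_matrix V (e(inv e i := b))) / det (col_matrix V e) else 0)"

lemma cramer_dep_dependency:
  assumes inj: "inj e" and e: "range e \<subseteq> {..<n}" and b: "b < n" "b \<notin> range e"
    and det: "det (col_matrix V e) \<noteq> 0"
  shows "dependency n V (cramer_dep V e b)"
proof -
  define x where "x = (\<chi> k. det (col_matrix V (e(k := b))) / det (col_matrix V e))"
  have "(\<chi> i j. if j = k then V b $ i else col_matrix V e $ i $ j) = col_matrix V (e(k := b))" for k
    by (simp add: col_matrix_def vec_eq_iff)
  then have "col_matrix V e *v x = V b" using cramer[OF det, of x "V b"] unfolding x_def by simp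
  then have sum_x: "(\<Sum>j\<in>UNIV. x $ j *\<^sub>R V (e j)) = V b" by (simp add: col_matrix_mult_vector)
  have "(\<Sum>i<n. cramer_dep V e b i *\<^sub>R V i) = (\<Sum>i\<in>insert b (range e). cramer_dep V e b i *\<^sub>R V i)"
    using e b by (intro sum.mono_neutral_right) (auto simp: cramer_dep_def)
  also have "\<dots> = - V b + (\<Sum>j\<in>UNIV. cramer_dep V e b (e j) *\<^sub>R V (e j))"
    using b(2) by (simp add: sum.reindex[OF inj] cramer_dep_def)
  also have "(\<Sum>j\<in>UNIV. cramer_dep V e b (e j) *\<^sub>R V (e j)) = (\<Sum>j\<in>UNIV. x $ j *\<^sub>R V (e j))"
    using b(2) by (intro sum.cong) (auto simp: cramer_dep_def x_def inv_f_f[OF inj])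
  finally show ?thesis unfolding dependency_def sum_x by simp
qed

lemma continuous_on_det_col_matrix:
  assumes "\<forall>i<n. continuous_on D (\<lambda>t. P t i)" "range e \<subseteq> {..<n}"
  shows "continuous_on D (\<lambda>t. det (col_matrix (P t) e :: real^'r^'r))"
proof -
  have component: "continuous_on D (\<lambda>t. P t (e j) $ i)" for i j
    using assms by (intro continuous_on_component) auto
  show ?thesis unfolding det_def col_matrix_def vec_lambda_beta
    by (intro continuous_intros component)
qed

lemma continuous_on_cramer_dep:
  assumes P: "\<forall>i<n. continuous_on D (\<lambda>t. P t i)" and e: "range e \<subseteq> {..<n}" and b: "b < n"
    and det: "\<forall>t\<in>D. det (col_matrix (P t) e) \<noteq> 0"
  shows "continuous_on D (\<lambda>t. cramer_dep (P t) e b i)"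
proof -
  have "range (e(k := b)) \<subseteq> {..<n}" for k using e b by auto
  then have "continuous_on D (\<lambda>t. det (col_matrix (P t) (e(inv e i := b))) / det (col_matrix (P t) e))"
    using det by (intro continuous_on_divide continuous_on_det_col_matrix[OF P e]
        continuous_on_det_col_matrix[OF P]) auto
  then show ?thesis unfolding cramer_dep_def by (cases "i = b"; cases "i \<in> range e") auto
qed

lemma sgn_constant_if_nonvanishing:
  fixes f :: "real \<Rightarrow> real"
  assumes f: "continuous_on {a..b} f" "\<forall>t\<in>{a..b}. f t \<noteq> 0" and st: "s \<in> {a..b}" "t \<in> {a..b}"
  shows "sgn (f s) = sgn (f t)"
proof -
  have conn: "connected (f ` {a..b})" using connected_continuous_image[OF f(1)] by simp
  have no_cross: "\<not> (f x < 0 \<and> 0 < f y)" if "x \<in> {a..b}" "y \<in> {a..b}" for x y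
  proof
    assume "f x < 0 \<and> 0 < f y"
    then have "0 \<in> f ` {a..b}"
      using connectedD_interval[OF conn, of "f x" "f y" 0] that by auto
    then show False using f(2) by auto
  qed
  have "f s \<noteq> 0" "f t \<noteq> 0" using f(2) st by auto
  then show ?thesis
    using no_cross[OF st] no_cross[OF st(2,1)] by (auto simp: sgn_if)
qed

lemma det_col_matrix_reenum:
  assumes f: "bij_betw f (UNIV :: 'r::finite set) R" and e: "bij_betw e (UNIV :: 'r set) R"
  obtains c :: real where "c = 1 \<or> c = -1" "\<And>V. det (col_matrix V f) = c * det (col_matrix V e)"
proof -
  define p where "p = inv_into UNIV e \<circ> f"
  have "bij_betw p UNIV UNIV"
    unfolding p_def using bij_betw_inv_into[OF e] f by (rule bij_betw_trans[rotated])
  then have p: "p permutes (UNIV :: 'r set)" by (rule bij_imp_permutes) auto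
  have "e (p j) = f j" for j
    using f e unfolding p_def by (auto simp: bij_betw_def f_inv_into_f)
  then have "col_matrix V f = (\<chi> i j. col_matrix V e $ i $ p j)" for V
    by (simp add: col_matrix_def vec_eq_iff)
  then have "det (col_matrix V f) = of_int (sign p) * det (col_matrix V e)" for V
    using det_permute_columns[OF p, of "col_matrix V e"] by simp
  moreover have "of_int (sign p) = (1::real) \<or> of_int (sign p) = (-1::real)"
    by (cases p rule: sign_cases) auto
  ultimately show ?thesis using that by blast
qed

lemma bij_betw_replace:
  assumes e: "bij_betw e (UNIV :: 'r set) T" and a: "a \<in> T" and b: "b \<notin> T"
  shows "bij_betw (e(inv e a := b)) UNIV (insert b (T - {a}))"
proof -
  have inj: "inj e" and rng: "range e = T" using e by (auto simp: bij_betw_def)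
  have ea: "e (inv e a) = a" using a rng by (simp add: f_inv_into_f)
  have "inj (e(inv e a := b))" using inj b rng by (intro inj_on_fun_updI) auto
  moreover have "e ` (UNIV - {inv e a}) = T - {a}"
    using inj rng ea by (metis image_set_diff image_empty image_insert)
  then have "range (e(inv e a := b)) = insert b (T - {a})"
    unfolding fun_upd_image by (simp only: UNIV_I if_True)
  ultimately show ?thesis by (simp add: bij_betw_def)
qed

locale mutation_path =
  fixes n :: nat and A B :: "nat \<Rightarrow> real^'r::finite" and P :: "real \<Rightarrow> nat \<Rightarrow> real^'r"
    and t0 :: real and R :: "nat set"
  assumes rn: "CARD('r) \<le> n" and gpA: "gen_pos n A" and gpB: "gen_pos n B"
    and cont: "\<forall>i<n. continuous_on {0..1} (\<lambda>t. P t i)"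
    and P0: "\<forall>i<n. P 0 i = A i" and P1: "\<forall>i<n. P 1 i = B i"
    and t0: "0 < t0" "t0 < 1"
    and gen_pos_path: "\<forall>t\<in>{0..1}. t \<noteq> t0 \<longrightarrow> gen_pos n (P t)"
    and R: "R \<subseteq> {..<n}" "card R = CARD('r)"
    and degenerate: "\<forall>S. S \<subseteq> {..<n} \<and> card S = CARD('r) \<longrightarrow> (\<not> cols_indep (P t0) S \<longleftrightarrow> S = R)"
    and small_indep: "\<forall>S. S \<subseteq> {..<n} \<and> card S = CARD('r) - 1 \<longrightarrow> cols_indep (P t0) S"
    and det_flip: "\<forall>s t. 0 \<le> s \<and> s < t0 \<and> t0 < t \<and> t \<le> 1 \<longrightarrow>
        sgn (det_cols (P s) R) \<noteq> sgn (det_cols (P t) R)"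
begin

lemma cols_indep_path:
  assumes "t \<in> {0..1}" "S \<subseteq> {..<n}" "card S = CARD('r)" "S \<noteq> R"
  shows "cols_indep (P t) S"
  using assms gen_pos_path degenerate unfolding gen_pos_def by (cases "t = t0") auto

definition path_circuit :: "nat set \<Rightarrow> nat \<Rightarrow> real \<Rightarrow> nat \<Rightarrow> real" where
  "path_circuit S b t = cramer_dep (P t) (col_enum (S - {b})) b"

context
  fixes S b
  assumes S: "S \<subseteq> {..<n}" "card S = CARD('r) + 1" and b: "b \<in> S" and SbR: "S - {b} \<noteq> R"
begin

lemma path_enum_bij: "bij_betw (col_enum (S - {b}) :: 'r \<Rightarrow> nat) UNIV (S - {b})"
  using S b by (intro col_enum_bij) (auto intro: finite_subset)

lemma det_path_enum_nonzero: "t \<in> {0..1} \<Longrightarrow> det (col_matrix (P t) (col_enum (S - {b}))) \<noteq> 0"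
  using cols_indep_path[of t "S - {b}"] cols_indep_iff_det[OF path_enum_bij] S b SbR
  by (auto intro: finite_subset)

lemma path_circuit_dependency: "t \<in> {0..1} \<Longrightarrow> dependency n (P t) (path_circuit S b t)"
  unfolding path_circuit_def using path_enum_bij S b det_path_enum_nonzero
  by (intro cramer_dep_dependency) (auto simp: bij_betw_def)

lemma continuous_on_path_circuit: "continuous_on {0..1} (\<lambda>t. path_circuit S b t i)"
  unfolding path_circuit_def using path_enum_bij S b cont det_path_enum_nonzero
  by (intro continuous_on_cramer_dep) (auto simp: bij_betw_def)

lemma path_circuit_base [simp]: "path_circuit S b t b = -1"
  by (simp add: path_circuit_def cramer_dep_def)

lemma path_circuit_outside: "i \<notin> S \<Longrightarrow> path_circuit S b t i = 0"
  using path_enum_bij b by (auto simp: path_circuit_def cramer_dep_def bij_betw_def)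

lemma path_circuit_nonzero:
  assumes t: "t \<in> {0..1}" and i: "i \<in> S" "i \<noteq> b" and indep: "cols_indep (P t) (S - {i})"
  shows "path_circuit S b t i \<noteq> 0"
proof
  assume "path_circuit S b t i = 0"
  then have "\<forall>j<n. j \<notin> S - {i} \<longrightarrow> path_circuit S b t j = 0"
    using path_circuit_outside by auto
  then have "path_circuit S b t b = 0"
    using cols_indep_sum_zero[OF indep] path_circuit_dependency[OF t] S(1) b i
    unfolding dependency_def by blast
  then show False by simp
qed

lemma sgn_path_circuit_constant:
  assumes i: "i \<in> S" "i \<noteq> b" "S - {i} \<noteq> R" and t: "t \<in> {0..1}" "t' \<in> {0..1}"
  shows "sgn (path_circuit S b t i) = sgn (path_circuit S b t' i)"
proof -
  have "S - {i} \<subseteq> {..<n}" "card (S - {i}) = CARD('r)"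
    using S i by (auto intro: finite_subset)
  then have "\<forall>s\<in>{0..1}. path_circuit S b s i \<noteq> 0"
    using path_circuit_nonzero i cols_indep_path by blast
  then show ?thesis using sgn_constant_if_nonvanishing[OF continuous_on_path_circuit _ t] by blast
qed

end

text \<open>A circuit is a multiple of the Cramer dependency on its support; when the support does not
  contain \<open>R\<close>, no coefficient of the latter vanishes along the path, so its signs persist.\<close>

lemma circuit_transport:
  assumes t: "t1 \<in> {0..1}" "t2 \<in> {0..1}"
    and X: "\<forall>i<n. P t1 i = X i" and Y: "\<forall>i<n. P t2 i = Y i" and gpX: "gen_pos n X"
    and lam: "circuit n X lam" "\<not> R \<subseteq> supp n lam"
  shows "\<exists>mu. dependency n Y mu \<and> sign_vec n mu = sign_vec n lam"
proof -
  define S where "S = supp n lam"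
  have S: "S \<subseteq> {..<n}" "card S = CARD('r) + 1"
    using lam(1) supp_subset unfolding S_def circuit_def by auto
  then obtain b where b: "b \<in> S" by fastforce
  have notR: "S - {i} \<noteq> R" for i using lam(2) unfolding S_def by blast
  note pc = path_circuit_outside[OF S b notR] path_circuit_base[OF S b notR]
  have same_sgn: "sgn (path_circuit S b t1 i) = sgn (path_circuit S b t2 i)" for i
    using sgn_path_circuit_constant[OF S b notR _ _ notR t] pc by (cases "i \<in> S"; cases "i = b") auto
  have "S - {b} \<subseteq> {..<n}" "card (S - {b}) = CARD('r)"
    using S b by (auto intro: finite_subset)
  then have "cols_indep X (S - {b})" using gpX unfolding gen_pos_def by blast
  moreover have "\<forall>i<n. i \<notin> S \<longrightarrow> lam i = 0" by (auto simp: S_def supp_def)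
  ultimately have eq: "\<forall>i<n. lam i = - lam b * path_circuit S b t1 i"
    using dependency_proportional[OF _ S(1) b, of X lam "path_circuit S b t1"] lam(1) pc
      path_circuit_dependency[OF S b notR t(1)] dependency_cong[OF X]
    unfolding circuit_def by simp
  define mu where "mu i = - lam b * path_circuit S b t2 i" for i
  have "dependency n Y mu"
    using dependency_scale path_circuit_dependency[OF S b notR t(2)] dependency_cong[OF Y]
    unfolding mu_def by blast
  moreover have "sign_vec n mu = sign_vec n lam"
    using eq same_sgn by (auto simp: sign_vec_def mu_def sgn_mult fun_eq_iff)
  ultimately show ?thesis by blast
qed

definition base :: nat where
  "base = (SOME b. b \<in> R)"

lemma base_in_R: "base \<in> R"
proof -
  have "R \<noteq> {}" using R(2) by auto
  then show ?thesis unfolding base_def by (simp add: some_in_eq)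
qed

definition circuit_at :: "nat \<Rightarrow> real \<Rightarrow> nat \<Rightarrow> real" where
  "circuit_at a = path_circuit (insert a R) base"

context
  fixes a assumes a: "a < n" "a \<notin> R"
begin

lemma insert_outside_R:
  "insert a R \<subseteq> {..<n}" "card (insert a R) = CARD('r) + 1" "base \<in> insert a R"
  "insert a R - {base} \<noteq> R"
  using a R base_in_R card_insert_disjoint[OF finite_subset[OF R(1) finite_lessThan] a(2)] by auto

lemma circuit_at_dependency: "t \<in> {0..1} \<Longrightarrow> dependency n (P t) (circuit_at a t)"
  unfolding circuit_at_def using path_circuit_dependency[OF insert_outside_R] .

lemma circuit_at_base [simp]: "circuit_at a t base = -1"
  unfolding circuit_at_def using path_circuit_base[OF insert_outside_R] .

lemma circuit_at_outside: "i \<notin> insert a R \<Longrightarrow> circuit_at a t i = 0"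
  unfolding circuit_at_def using path_circuit_outside[OF insert_outside_R] .

lemma sgn_circuit_at_constant:
  assumes "i \<in> R" "i \<noteq> base" "t \<in> {0..1}" "t' \<in> {0..1}"
  shows "sgn (circuit_at a t i) = sgn (circuit_at a t' i)"
  unfolding circuit_at_def using sgn_path_circuit_constant[OF insert_outside_R, of i t t'] assms a
  by auto

lemma circuit_at_nonzero_on_R:
  assumes i: "i \<in> R" and t: "t \<in> {0..1}"
  shows "circuit_at a t i \<noteq> 0"
proof (cases "i = base")
  case False
  have "insert a R - {i} \<subseteq> {..<n}" "card (insert a R - {i}) = CARD('r)" "insert a R - {i} \<noteq> R"
    using insert_outside_R(1,2) i a by auto
  then have "cols_indep (P t) (insert a R - {i})" using cols_indep_path[OF t] by blast
  then show ?thesis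
    unfolding circuit_at_def using path_circuit_nonzero[OF insert_outside_R t _ False] i by auto
qed simp

definition swap_enum :: "'r \<Rightarrow> nat" where
  "swap_enum = (col_enum (insert a R - {base}))(inv (col_enum (insert a R - {base})) a := base)"

lemma swap_enum_bij: "bij_betw swap_enum UNIV R"
proof -
  have "bij_betw swap_enum UNIV (insert base (insert a R - {base} - {a}))"
    unfolding swap_enum_def using path_enum_bij[OF insert_outside_R] a base_in_R
    by (intro bij_betw_replace) auto
  moreover have "insert base (insert a R - {base} - {a}) = R" using a base_in_R by auto
  ultimately show ?thesis by simp
qed

lemma circuit_at_outside_point:
  "circuit_at a t a = det (col_matrix (P t) swap_enum) / det (col_matrix (P t) (col_enum (insert a R - {base})))"
proof -
  have "a \<in> range (col_enum (insert a R - {base}) :: 'r \<Rightarrow> nat)" "a \<noteq> base"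
    using path_enum_bij[OF insert_outside_R] a base_in_R by (auto simp: bij_betw_def)
  then show ?thesis unfolding circuit_at_def path_circuit_def cramer_dep_def swap_enum_def by simp
qed

lemma circuit_at_outside_point_t0: "circuit_at a t0 a = 0"
proof -
  have "\<not> cols_indep (P t0) R" using degenerate R by blast
  then show ?thesis using circuit_at_outside_point cols_indep_iff_det[OF swap_enum_bij] by simp
qed

lemma circuit_at_outside_point_flips: "circuit_at a 0 a \<noteq> 0 \<and> sgn (circuit_at a 1 a) = - sgn (circuit_at a 0 a)"
proof -
  have eR: "bij_betw (col_enum R :: 'r \<Rightarrow> nat) UNIV R" using R by (intro col_enum_bij) (auto intro: finite_subset)
  obtain c :: real where c: "c = 1 \<or> c = -1" "\<And>V. det (col_matrix V swap_enum) = c * det_cols V R"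
    using det_col_matrix_reenum[OF swap_enum_bij eR] det_cols_eq by metis
  have "gen_pos n (P 0)" "gen_pos n (P 1)" using gen_pos_path t0 by auto
  then have "cols_indep (P 0) R" "cols_indep (P 1) R" using R unfolding gen_pos_def by auto
  then have nz: "det_cols (P 0) R \<noteq> 0" "det_cols (P 1) R \<noteq> 0"
    using cols_indep_iff_det[OF eR] by (simp_all add: det_cols_eq)
  moreover have "sgn (det_cols (P 0) R) \<noteq> sgn (det_cols (P 1) R)" using det_flip t0 by auto
  ultimately have num: "sgn (det_cols (P 1) R) = - sgn (det_cols (P 0) R)"
    by (auto simp: sgn_if split: if_splits)
  let ?e = "col_enum (insert a R - {base}) :: 'r \<Rightarrow> nat"
  have den_nz: "\<forall>t\<in>{0..1}. det (col_matrix (P t) ?e) \<noteq> 0"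
    using det_path_enum_nonzero[OF insert_outside_R] by blast
  have "range ?e \<subseteq> {..<n}" using path_enum_bij[OF insert_outside_R] insert_outside_R(1)
    by (auto simp: bij_betw_def)
  then have "continuous_on {0..1} (\<lambda>t. det (col_matrix (P t) ?e))"
    by (rule continuous_on_det_col_matrix[OF cont])
  then have den: "sgn (det (col_matrix (P 1) ?e)) = sgn (det (col_matrix (P 0) ?e))"
    using sgn_constant_if_nonvanishing[OF _ den_nz] by simp
  show ?thesis
    unfolding circuit_at_outside_point c(2) using nz den_nz num den c(1) by (auto simp: sgn_mult)
qed

end

text \<open>At the degenerate time the circuit on \<open>R \<union> {a}\<close> is supported on \<open>R\<close>, where dependencies are
  unique up to scale; so it does not depend on \<open>a\<close>.\<close>

lemma circuit_at_t0_eq: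
  assumes a: "a < n" "a \<notin> R" and a': "a' < n" "a' \<notin> R" and i: "i \<in> R"
  shows "circuit_at a t0 i = circuit_at a' t0 i"
proof -
  have t0_in: "t0 \<in> {0..1}" using t0 by auto
  have "R - {base} \<subseteq> {..<n}" "card (R - {base}) = CARD('r) - 1"
    using R base_in_R by (auto intro: finite_subset)
  then have indep: "cols_indep (P t0) (R - {base})" using small_indep by blast
  have outside: "\<forall>j<n. j \<notin> R \<longrightarrow> circuit_at c t0 j = 0" if "c < n" "c \<notin> R" for c
    using circuit_at_outside_point_t0[OF that] circuit_at_outside[OF that] by (metis insertE)
  have "\<forall>j<n. circuit_at a t0 j = circuit_at a t0 base / circuit_at a' t0 base * circuit_at a' t0 j"
    by (rule dependency_proportional[OF indep R(1) base_in_R circuit_at_dependency[OF a t0_in]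
          outside[OF a] circuit_at_dependency[OF a' t0_in] outside[OF a']]) (simp add: a')
  then show ?thesis using i R(1) circuit_at_base[OF a] circuit_at_base[OF a'] by auto
qed

text \<open>The signs of the circuits of \<open>A\<close> on the sets \<open>R \<union> {a}\<close>; on \<open>R\<close> they are read off at the
  degenerate time, where they do not depend on \<open>a\<close>.\<close>

definition signature :: "nat \<Rightarrow> real" where
  "signature i = (if i \<in> R then sgn (circuit_at (SOME a. a < n \<and> a \<notin> R) t0 i)
     else if i < n then sgn (circuit_at i 0 i) else 0)"

context
  assumes rn_less: "CARD('r) < n"
begin

lemma exists_outside_R: "\<exists>a. a < n \<and> a \<notin> R"
  using exists_index_outside[OF R(1)] R(2) rn_less by metis

lemma sgn_circuit_at_on_R:
  assumes a: "a < n" "a \<notin> R" and i: "i \<in> R" and t: "t \<in> {0..1}"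
  shows "sgn (circuit_at a t i) = signature i"
proof -
  define a0 where "a0 = (SOME a. a < n \<and> a \<notin> R)"
  have a0: "a0 < n" "a0 \<notin> R" using someI_ex[OF exists_outside_R] unfolding a0_def by auto
  show ?thesis
  proof (cases "i = base")
    case False
    have "t0 \<in> {0..1}" using t0 by auto
    then have "sgn (circuit_at a t i) = sgn (circuit_at a t0 i)"
      using sgn_circuit_at_constant[OF a i False t] by blast
    then show ?thesis using circuit_at_t0_eq[OF a a0 i] i unfolding signature_def a0_def by simp
  qed (use a a0 i in \<open>simp add: signature_def a0_def\<close>)
qed

lemma signature_full: "signature \<in> full_sign_vectors n"
proof -
  obtain a0 where a0: "a0 < n" "a0 \<notin> R" using exists_outside_R by blast
  have "signature i \<in> {-1, 1}" if "i < n" for i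
  proof (cases "i \<in> R")
    case True
    have "t0 \<in> {0..1}" using t0 by auto
    then have "signature i = sgn (circuit_at a0 t0 i)" "circuit_at a0 t0 i \<noteq> 0"
      using sgn_circuit_at_on_R[OF a0 True] circuit_at_nonzero_on_R[OF a0 True] by auto
    then show ?thesis by (simp add: sgn_if)
  next
    case False
    then show ?thesis
      using circuit_at_outside_point_flips[OF that False] that by (auto simp: signature_def sgn_if)
  qed
  moreover have "signature i = 0" if "i \<ge> n" for i using that R(1) by (auto simp: signature_def)
  ultimately show ?thesis unfolding full_sign_vectors_def by blast
qed

lemma has_circuit_signs_A: "has_circuit_signs n A R signature"
  unfolding has_circuit_signs_def
proof (intro allI impI)
  fix a assume a: "a < n" "a \<notin> R"
  have "dependency n A (circuit_at a 0)"
    using circuit_at_dependency[OF a, of 0] dependency_cong[OF P0] by simp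
  moreover have "\<forall>i\<in>insert a R. sgn (circuit_at a 0 i) = signature i"
    using sgn_circuit_at_on_R[OF a] a by (auto simp: signature_def)
  ultimately show "\<exists>k. dependency n A k \<and> (\<forall>i<n. i \<notin> insert a R \<longrightarrow> k i = 0) \<and>
      (\<forall>i\<in>insert a R. sgn (k i) = signature i)"
    using circuit_at_outside[OF a] by blast
qed

lemma has_circuit_signs_B: "has_circuit_signs n B R (flip_outside R signature)"
  unfolding has_circuit_signs_def
proof (intro allI impI)
  fix a assume a: "a < n" "a \<notin> R"
  have "dependency n B (circuit_at a 1)"
    using circuit_at_dependency[OF a, of 1] dependency_cong[OF P1] by simp
  moreover have "\<forall>i\<in>insert a R. sgn (circuit_at a 1 i) = flip_outside R signature i"
    using sgn_circuit_at_on_R[OF a] circuit_at_outside_point_flips[OF a] a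
    by (auto simp: signature_def flip_outside_def)
  ultimately show "\<exists>k. dependency n B k \<and> (\<forall>i<n. i \<notin> insert a R \<longrightarrow> k i = 0) \<and>
      (\<forall>i\<in>insert a R. sgn (k i) = flip_outside R signature i)"
    using circuit_at_outside[OF a] by blast
qed

lemma dep_patterns_diff_A_B:
  "dep_patterns n A - dep_patterns n B =
     patterns_below R n signature \<union> patterns_below R n (- signature)"
  using circuit_transport[of 0 1 A B] P0 P1 gpA
  by (intro dep_patterns_diff_eq[OF gpA gpB rn R signature_full has_circuit_signs_A has_circuit_signs_B])
    auto

lemma dep_patterns_diff_B_A:
  "dep_patterns n B - dep_patterns n A =
     patterns_below R n (flip_outside R signature) \<union> patterns_below R n (- flip_outside R signature)"
  using circuit_transport[of 1 0 B A] P0 P1 gpB has_circuit_signs_A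
  by (intro dep_patterns_diff_eq[OF gpB gpA rn R flip_outside_full[OF signature_full]
        has_circuit_signs_B]) auto

lemma signature_new_covector: "signature \<in> covectors n B - covectors n A"
  using circuit_signs_new_covector[OF gpA gpB R rn_less signature_full has_circuit_signs_A
      has_circuit_signs_B] .

end

end

section \<open>Counting the dependency patterns that change\<close>

definition pattern_weight :: "nat \<Rightarrow> real \<Rightarrow> real \<Rightarrow> (nat \<Rightarrow> real) \<Rightarrow> real" where
  "pattern_weight n x y F = x ^ card {i. i < n \<and> F i = 0} * y ^ card {i. i < n \<and> F i = -1}"

definition weight_factor :: "real \<Rightarrow> real \<Rightarrow> real \<Rightarrow> real" where
  "weight_factor x y v = (if v = 0 then x else if v = -1 then y else 1)"

definition sign_box :: "nat set \<Rightarrow> nat \<Rightarrow> (nat \<Rightarrow> real) \<Rightarrow> (nat \<Rightarrow> real) set" where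
  "sign_box R n Z = {F. (\<forall>i<n. F i \<in> (if i \<in> R then {Z i} else {0, Z i})) \<and> (\<forall>i\<ge>n. F i = 0)}"

lemma fstar_eq_sum_weight: "fstar n V x y = (\<Sum>F\<in>dep_patterns n V. pattern_weight n x y F)"
  unfolding fstar_def pattern_weight_def ..

lemma fstar_diff:
  "fstar n A x y - fstar n B x y =
     (\<Sum>F\<in>dep_patterns n A - dep_patterns n B. pattern_weight n x y F)
   - (\<Sum>F\<in>dep_patterns n B - dep_patterns n A. pattern_weight n x y F)"
  unfolding fstar_eq_sum_weight
  using sum.Int_Diff[OF finite_dep_patterns[of n A], where g = "pattern_weight n x y" and B = "dep_patterns n B"]
    sum.Int_Diff[OF finite_dep_patterns[of n B], where g = "pattern_weight n x y" and B = "dep_patterns n A"]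
  by (simp add: Int_commute)

lemma prod_if_one_power:
  assumes "finite M"
  shows "(\<Prod>c\<in>M. if Q c then a else 1) = a ^ card {c\<in>M. Q c}"
proof -
  have "(\<Prod>c\<in>M. if Q c then a else 1) = (\<Prod>c\<in>{c\<in>M. Q c}. a)"
    using assms by (intro prod.mono_neutral_cong_right) auto
  then show ?thesis by simp
qed

lemma pattern_weight_prod: "pattern_weight n x y F = (\<Prod>i<n. weight_factor x y (F i))"
proof -
  have "(\<Prod>i<n. weight_factor x y (F i)) =
      (\<Prod>i<n. (if F i = 0 then x else 1) * (if F i = -1 then y else 1))"
    by (intro prod.cong) (auto simp: weight_factor_def)
  then show ?thesis
    by (simp add: prod.distrib prod_if_one_power pattern_weight_def)
qed

lemma sum_prod_sign_box:
  fixes f :: "real \<Rightarrow> real"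
  shows "(\<Sum>F\<in>sign_box R n Z. \<Prod>i<n. f (F i)) = (\<Prod>i<n. \<Sum>v\<in>(if i \<in> R then {Z i} else {0, Z i}). f v)"
proof -
  let ?C = "\<lambda>i. if i \<in> R then {Z i} else {0, Z i}"
  have "(\<Sum>F\<in>sign_box R n Z. \<Prod>i<n. f (F i)) = (\<Sum>G\<in>PiE {..<n} ?C. \<Prod>i<n. f (G i))"
  proof (rule sum.reindex_bij_witness[where i = "\<lambda>G i. if i < n then G i else 0" and j = "\<lambda>F. restrict F {..<n}"])
    fix G assume G: "G \<in> PiE {..<n} ?C"
    show "restrict (\<lambda>i. if i < n then G i else 0) {..<n} = G"
      using G by (auto simp: PiE_def extensional_def restrict_def)
    show "(\<lambda>i. if i < n then G i else 0) \<in> sign_box R n Z"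
      using G by (auto simp: sign_box_def PiE_def Pi_def)
  next
    fix F assume F: "F \<in> sign_box R n Z"
    show "(\<lambda>i. if i < n then restrict F {..<n} i else 0) = F"
      using F by (auto simp: sign_box_def fun_eq_iff)
    show "restrict F {..<n} \<in> PiE {..<n} ?C" using F by (auto simp: sign_box_def)
    show "(\<Prod>i<n. f (restrict F {..<n} i)) = (\<Prod>i<n. f (F i))" by simp
  qed
  also have "\<dots> = (\<Prod>i<n. \<Sum>v\<in>?C i. f v)"
    by (rule prod_sum_PiE[where f = "\<lambda>i v. f v", symmetric]) auto
  finally show ?thesis .
qed

lemma sum_weight_sign_box:
  assumes R: "R \<subseteq> {..<n}" and Z: "Z \<in> full_sign_vectors n"
  defines "M \<equiv> {..<n} - R"
  shows "(\<Sum>F\<in>sign_box R n Z. pattern_weight n x y F) =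
    y ^ card (R \<inter> {i. Z i = -1}) * (x + y) ^ card (M \<inter> {i. Z i = -1}) * (x + 1) ^ card (M - {i. Z i = -1})"
proof -
  have fR: "finite R" using R finite_subset by blast
  have local_sum: "(\<Sum>v\<in>(if i \<in> R then {Z i} else {0, Z i}). weight_factor x y v) =
      (if i \<in> R then (if Z i = -1 then y else 1) else (if Z i = -1 then x + y else x + 1))"
    if "i < n" for i
    using full_sign_vectors_nonzero[OF Z that] Z that
    by (auto simp: weight_factor_def full_sign_vectors_def)
  have "(\<Sum>F\<in>sign_box R n Z. pattern_weight n x y F) =
      (\<Prod>i<n. if i \<in> R then (if Z i = -1 then y else 1) else (if Z i = -1 then x + y else x + 1))"
    unfolding pattern_weight_prod sum_prod_sign_box by (intro prod.cong) (auto simp: local_sum)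
  also have "\<dots> = (\<Prod>i\<in>R \<union> M. if i \<in> R then (if Z i = -1 then y else 1)
      else (if Z i = -1 then x + y else x + 1))"
    using R unfolding M_def by (intro prod.cong) auto
  also have "\<dots> = (\<Prod>i\<in>R. if Z i = -1 then y else 1) * (\<Prod>i\<in>M. if Z i = -1 then x + y else x + 1)"
    using fR by (subst prod.union_disjoint) (auto simp: M_def intro!: arg_cong2[where f = times] prod.cong)
  also have "(\<Prod>i\<in>R. if Z i = -1 then y else 1) = y ^ card (R \<inter> {i. Z i = -1})"
    using prod_if_one_power[OF fR] by (simp add: Collect_conj_eq Int_commute)
  also have "(\<Prod>i\<in>M. if Z i = -1 then x + y else x + 1) =
      (\<Prod>i\<in>M \<inter> {i. Z i = -1}. x + y) * (\<Prod>i\<in>M \<inter> - {i. Z i = -1}. x + 1)"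
    by (rule prod.If_cases) (simp add: M_def)
  also have "\<dots> = (x + y) ^ card (M \<inter> {i. Z i = -1}) * (x + 1) ^ card (M - {i. Z i = -1})"
    by (simp add: Diff_eq)
  finally show ?thesis by (simp add: mult.assoc)
qed

lemma patterns_below_eq_sign_box:
  assumes R: "R \<subseteq> {..<n}"
  shows "patterns_below R n Z = sign_box R n Z - {\<lambda>i. if i \<in> R then Z i else 0}"
proof -
  have box: "F \<in> sign_box R n Z \<longleftrightarrow>
      (\<forall>i\<in>R. F i = Z i) \<and> (\<forall>i<n. i \<notin> R \<longrightarrow> F i = 0 \<or> F i = Z i) \<and> (\<forall>i\<ge>n. F i = 0)" for F
    using R by (auto simp: sign_box_def)
  have base: "F = (\<lambda>i. if i \<in> R then Z i else 0) \<longleftrightarrow> \<not> (\<exists>i<n. i \<notin> R \<and> F i \<noteq> 0)"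
    if "F \<in> sign_box R n Z" for F
    using that R unfolding box by (auto simp: fun_eq_iff) (metis not_le)
  show ?thesis
    by (rule set_eqI) (use box base in \<open>auto simp: patterns_below_def\<close>)
qed

lemma sign_box_subset_sign_vectors:
  assumes "Z \<in> full_sign_vectors n"
  shows "sign_box R n Z \<subseteq> sign_vectors n"
proof
  fix F assume F: "F \<in> sign_box R n Z"
  have "F i \<in> {-1, 0, 1}" if "i < n" for i
  proof -
    have "F i = 0 \<or> F i = Z i" "Z i \<in> {-1, 1}"
      using F assms that unfolding sign_box_def full_sign_vectors_def by (auto split: if_splits)
    then show ?thesis by auto
  qed
  then show "F \<in> sign_vectors n" using F unfolding sign_box_def sign_vectors_def by auto
qed

lemma sum_weight_patterns_below:
  assumes R: "R \<subseteq> {..<n}" and Z: "Z \<in> full_sign_vectors n"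
  defines "m \<equiv> n - card R" and "k \<equiv> card (({..<n} - R) \<inter> {i. Z i = -1})"
  shows "(\<Sum>F\<in>patterns_below R n Z. pattern_weight n x y F) =
    y ^ card (R \<inter> {i. Z i = -1}) * ((x + y) ^ k * (x + 1) ^ (m - k) - x ^ m)"
proof -
  define M where "M = {..<n} - R"
  define a where "a = card (R \<inter> {i. Z i = -1})"
  have fR: "finite R" using R finite_subset by blast
  have cM: "card M = m" unfolding M_def m_def using R fR by (simp add: card_Diff_subset)
  have kM: "card (M \<inter> {i. Z i = -1}) = k" unfolding k_def M_def ..
  have "card (M - {i. Z i = -1}) = card M - card (M \<inter> {i. Z i = -1})"
    by (rule card_Diff_subset_Int) (simp add: M_def)
  then have cM': "card (M - {i. Z i = -1}) = m - k" using cM kM by simp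
  define base where "base i = (if i \<in> R then Z i else 0)" for i
  have "{i. i < n \<and> base i = 0} = M"
    using R full_sign_vectors_nonzero[OF Z] unfolding M_def base_def by auto
  moreover have "{i. i < n \<and> base i = -1} = R \<inter> {i. Z i = -1}"
    using R unfolding base_def by auto
  ultimately have w_base: "pattern_weight n x y base = x ^ m * y ^ a"
    using cM by (simp add: pattern_weight_def a_def)
  have "base \<in> sign_box R n Z" using R by (auto simp: sign_box_def base_def)
  moreover have "finite (sign_box R n Z)"
    using finite_subset[OF sign_box_subset_sign_vectors[OF Z] finite_sign_vectors] .
  ultimately have "(\<Sum>F\<in>patterns_below R n Z. pattern_weight n x y F) =
      (\<Sum>F\<in>sign_box R n Z. pattern_weight n x y F) - pattern_weight n x y base"
    unfolding patterns_below_eq_sign_box[OF R] base_def[abs_def] by (simp add: sum_diff1)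
  also have "\<dots> = y ^ a * (x + y) ^ k * (x + 1) ^ (m - k) - x ^ m * y ^ a"
    unfolding sum_weight_sign_box[OF R Z] w_base M_def[symmetric] kM cM' a_def ..
  finally show ?thesis by (simp add: a_def right_diff_distrib mult.commute mult.left_commute)
qed

lemma finite_patterns_below:
  assumes "Z \<in> full_sign_vectors n"
  shows "finite (patterns_below R n Z)"
  using finite_sign_vectors patterns_below_sign_vectors[OF assms] by (blast intro: finite_subset)

lemma patterns_below_uminus_disjoint:
  assumes "R \<subseteq> {..<n}" "R \<noteq> {}" "Z \<in> full_sign_vectors n"
  shows "patterns_below R n Z \<inter> patterns_below R n (- Z) = {}"
proof -
  obtain b where b: "b \<in> R" using assms(2) by blast
  then have "Z b \<noteq> 0" using full_sign_vectors_nonzero[OF assms(3)] assms(1) by auto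
  then show ?thesis using b by (auto simp: patterns_below_def)
qed

lemma card_uminus_neg:
  assumes "S \<subseteq> {..<n}" "Z \<in> full_sign_vectors n"
  shows "card (S \<inter> {i. (- Z) i = -1}) = card S - card (S \<inter> {i. Z i = -1})"
proof -
  have "S \<inter> {i. (- Z) i = -1} = S - (S \<inter> {i. Z i = -1})"
    using assms unfolding full_sign_vectors_def by force
  moreover have "finite S" using assms(1) finite_subset by blast
  ultimately show ?thesis by (simp add: card_Diff_subset)
qed

definition box_poly :: "nat \<Rightarrow> nat \<Rightarrow> real \<Rightarrow> real \<Rightarrow> real" where
  "box_poly m k x y = (x + y) ^ k * (x + 1) ^ (m - k)"

lemma sum_weight_patterns_below_pm:
  assumes R: "R \<subseteq> {..<n}" "R \<noteq> {}" and Z: "Z \<in> full_sign_vectors n"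
  defines "m \<equiv> n - card R" and "a \<equiv> card (R \<inter> {i. Z i = -1})"
    and "k \<equiv> card (({..<n} - R) \<inter> {i. Z i = -1})"
  shows "(\<Sum>F\<in>patterns_below R n Z \<union> patterns_below R n (- Z). pattern_weight n x y F) =
    y ^ a * (box_poly m k x y - x ^ m) + y ^ (card R - a) * (box_poly m (m - k) x y - x ^ m)"
proof -
  have "card ({..<n} - R) = m"
    unfolding m_def using card_Diff_subset[OF finite_subset[OF R(1) finite_lessThan] R(1)] by simp
  then have k': "card (({..<n} - R) \<inter> {i. (- Z) i = -1}) = m - k"
    using card_uminus_neg[OF _ Z, of "{..<n} - R"] unfolding k_def by auto
  have a': "card (R \<inter> {i. (- Z) i = -1}) = card R - a"
    using card_uminus_neg[OF R(1) Z] unfolding a_def .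
  have "(\<Sum>F\<in>patterns_below R n Z. pattern_weight n x y F) = y ^ a * (box_poly m k x y - x ^ m)"
    using sum_weight_patterns_below[OF R(1) Z] unfolding box_poly_def m_def a_def k_def .
  moreover have "(\<Sum>F\<in>patterns_below R n (- Z). pattern_weight n x y F) =
      y ^ (card R - a) * (box_poly m (m - k) x y - x ^ m)"
    using sum_weight_patterns_below[OF R(1) uminus_full[OF Z], of x y] unfolding box_poly_def k' a' m_def .
  ultimately show ?thesis
    by (simp add: sum.union_disjoint[OF finite_patterns_below[OF Z] finite_patterns_below[OF uminus_full[OF Z]]
        patterns_below_uminus_disjoint[OF R Z]])
qed

section \<open>The g-polynomial\<close>

definition g_poly :: "nat \<Rightarrow> nat \<Rightarrow> (nat \<Rightarrow> nat \<Rightarrow> int) \<Rightarrow> real \<Rightarrow> real \<Rightarrow> real" where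
  "g_poly r m G x y = (\<Sum>j\<le>r. \<Sum>k\<le>m. of_int (G j k) * (x + y) ^ k * (x + 1) ^ (m - k) * y ^ j)"

lemma g_poly_add: "g_poly r m (\<lambda>j k. G j k + H j k) x y = g_poly r m G x y + g_poly r m H x y"
  unfolding g_poly_def by (simp add: sum.distrib distrib_right)

lemma double_sum_delta:
  assumes "a \<le> (r::nat)" "b \<le> (m::nat)"
  shows "(\<Sum>j\<le>r. \<Sum>k\<le>m. if j = a \<and> k = b then (T j k :: real) else 0) = T a b"
proof -
  have "(\<Sum>j\<le>r. \<Sum>k\<le>m. if j = a \<and> k = b then T j k else 0) =
      (\<Sum>j\<le>r. if j = a then (\<Sum>k\<le>m. if k = b then T j k else 0) else 0)"
    by (intro sum.cong) auto
  then show ?thesis using assms by (simp add: sum.delta)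
qed

lemma g_poly_gmat:
  assumes i: "i \<le> r" and l: "l \<le> n - r"
  shows "g_poly r (n - r) (gmat r n i l) x y =
     y ^ i * box_poly (n - r) l x y + y ^ (r - i) * box_poly (n - r) (n - r - l) x y
     - y ^ (r - i) * box_poly (n - r) l x y - y ^ i * box_poly (n - r) (n - r - l) x y"
proof (cases "2 * i = r \<or> 2 * l = n - r")
  case True
  then have "r - i = i \<or> n - r - l = l" by auto
  moreover have "gmat r n i l = (\<lambda>j k. 0)" using True unfolding gmat_def by simp
  ultimately show ?thesis unfolding g_poly_def by auto
next
  case False
  define m where "m = n - r"
  define T where "T j k = (x + y) ^ k * (x + 1) ^ (m - k) * y ^ j" for j k
  have "of_int (gmat r n i l j k) * (x + y) ^ k * (x + 1) ^ (m - k) * y ^ j =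
      (if j = i \<and> k = l then T j k else 0) + (if j = r - i \<and> k = m - l then T j k else 0)
      - (if j = r - i \<and> k = l then T j k else 0) - (if j = i \<and> k = m - l then T j k else 0)" for j k
    using False unfolding gmat_def T_def m_def by (simp add: algebra_simps)
  then have "g_poly r m (gmat r n i l) x y = T i l + T (r - i) (m - l) - T (r - i) l - T i (m - l)"
    using i l unfolding g_poly_def m_def
    by (simp add: sum.distrib sum_subtractf double_sum_delta del: of_int_add of_int_diff)
  then show ?thesis unfolding T_def box_poly_def m_def by (simp add: algebra_simps)
qed

lemma gmat_symmetric:
  assumes "i \<le> r" "l \<le> n - r"
  shows "gmat r n (r - i) (n - r - l) = gmat r n i l"
proof -
  have "r - (r - i) = i" "n - r - (n - r - l) = l" using assms by auto
  moreover have "2 * (r - i) = r \<longleftrightarrow> 2 * i = r" "2 * (n - r - l) = n - r \<longleftrightarrow> 2 * l = n - r"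
    using assms by auto
  ultimately show ?thesis unfolding gmat_def by (simp add: fun_eq_iff algebra_simps)
qed

context mutation_path
begin

lemma fstar_diff_mutation_path:
  assumes rn_less: "CARD('r) < n"
  defines "m \<equiv> n - CARD('r)" and "a \<equiv> card (R \<inter> {i. signature i = -1})"
    and "k \<equiv> card (({..<n} - R) \<inter> {i. signature i = -1})"
  shows "fstar n A x y - fstar n B x y =
    y ^ a * box_poly m k x y + y ^ (CARD('r) - a) * box_poly m (m - k) x y
    - y ^ (CARD('r) - a) * box_poly m k x y - y ^ a * box_poly m (m - k) x y"
proof -
  note sig = signature_full[OF rn_less]
  have Rne: "R \<noteq> {}" using R(2) by auto
  have "R \<inter> {i. flip_outside R signature i = -1} = R \<inter> {i. signature i = -1}"
    by (auto simp: flip_outside_def)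
  then have a': "card (R \<inter> {i. flip_outside R signature i = -1}) = a" unfolding a_def by simp
  have "({..<n} - R) \<inter> {i. flip_outside R signature i = -1} = ({..<n} - R) \<inter> {i. (- signature) i = -1}"
    by (auto simp: flip_outside_def)
  moreover have "card ({..<n} - R) = m"
    unfolding m_def using card_Diff_subset[OF finite_subset[OF R(1) finite_lessThan] R(1)] R(2) by simp
  ultimately have k': "card (({..<n} - R) \<inter> {i. flip_outside R signature i = -1}) = m - k"
    using card_uminus_neg[OF _ sig, of "{..<n} - R"] unfolding k_def by auto
  have "k \<le> m"
    using card_mono[of "{..<n} - R" "({..<n} - R) \<inter> {i. signature i = -1}"] \<open>card ({..<n} - R) = m\<close>
    unfolding k_def by auto
  then have "m - (m - k) = k" by simp
  then show ?thesis
    unfolding fstar_diff dep_patterns_diff_A_B[OF rn_less] dep_patterns_diff_B_A[OF rn_less]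
      sum_weight_patterns_below_pm[OF R(1) Rne sig] sum_weight_patterns_below_pm[OF R(1) Rne flip_outside_full[OF sig]]
      a' k' R(2) m_def[symmetric] a_def[symmetric] k_def[symmetric]
    by (simp add: algebra_simps)
qed

lemma fstar_diff_mutation_path_gmat:
  assumes rn_less: "CARD('r) < n"
    and Y: "{F \<in> covectors n B - covectors n A. \<forall>i<n. F i \<in> {-1, 1}} = {Y, - Y}"
  shows "fstar n A x y - fstar n B x y = g_poly CARD('r) (n - CARD('r))
    (gmat CARD('r) n (card (R \<inter> {j. Y j = -1})) (card ({j. j < n \<and> Y j = -1} - R))) x y"
proof -
  define m a k where "m = n - CARD('r)" and "a = card (R \<inter> {i. signature i = -1})"
    and "k = card (({..<n} - R) \<inter> {i. signature i = -1})"
  note sig = signature_full[OF rn_less]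
  have "signature \<in> {Y, - Y}"
    using signature_new_covector[OF rn_less] sig unfolding Y[symmetric] full_sign_vectors_def by auto
  then have "Y = signature \<or> Y = - signature" by auto
  moreover have "({j. j < n \<and> Z j = -1} - R) = ({..<n} - R) \<inter> {i. Z i = -1}" for Z :: "nat \<Rightarrow> real"
    by auto
  moreover have "card (({..<n} - R) \<inter> {i. (- signature) i = -1}) = m - k"
    using card_uminus_neg[OF _ sig, of "{..<n} - R"] R unfolding m_def k_def
    by (simp add: card_Diff_subset finite_subset)
  moreover have "card (R \<inter> {i. (- signature) i = -1}) = CARD('r) - a"
    using card_uminus_neg[OF R(1) sig] R(2) unfolding a_def by simp
  moreover have "a \<le> CARD('r)" "k \<le> m"
    using R card_mono[of R "R \<inter> {i. signature i = -1}"]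
      card_mono[of "{..<n} - R" "({..<n} - R) \<inter> {i. signature i = -1}"]
    unfolding a_def k_def m_def by (auto simp: card_Diff_subset finite_subset)
  ultimately have "gmat CARD('r) n (card (R \<inter> {j. Y j = -1})) (card ({j. j < n \<and> Y j = -1} - R)) =
      gmat CARD('r) n a k"
    unfolding a_def k_def m_def using gmat_symmetric by auto
  then show ?thesis
    using fstar_diff_mutation_path[OF rn_less] g_poly_gmat[of a "CARD('r)" k n x y] \<open>a \<le> CARD('r)\<close> \<open>k \<le> m\<close>
    unfolding m_def a_def k_def by simp
qed

end

lemma fstar_diff_mutation:
  fixes A B :: "nat \<Rightarrow> real^'r::finite"
  assumes rn: "CARD('r) \<le> n" and mut: "mutation n A B G"
  shows "fstar n A x y - fstar n B x y = g_poly CARD('r) (n - CARD('r)) G x y"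
proof -
  obtain P t0 R Y where path: "mutation_path n A B P t0 R"
    and Y: "{F \<in> covectors n B - covectors n A. \<forall>i<n. F i \<in> {-1, 1}} = {Y, - Y}"
    and G: "G = gmat CARD('r) n (card (R \<inter> {j. Y j = -1})) (card ({j. j < n \<and> Y j = -1} - R))"
    using mut rn unfolding mutation_def mutation_path_def by blast
  interpret mutation_path n A B P t0 R by (rule path)
  show ?thesis
  proof (cases "CARD('r) < n")
    case True
    then show ?thesis unfolding G by (rule fstar_diff_mutation_path_gmat[OF _ Y])
  next
    case False
    then have "CARD('r) = n" using rn by simp
    moreover from this have "R = {..<n}" using R by (intro card_subset_eq) auto
    ultimately have "G = (\<lambda>j k. 0)" unfolding G gmat_def by (auto simp: fun_eq_iff)
    then show ?thesis
      using dep_patterns_empty[OF gpA] dep_patterns_empty[OF gpB] \<open>CARD('r) = n\<close>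
      by (simp add: fstar_def g_poly_def)
  qed
qed

section \<open>Linear independence of the g-basis\<close>

lemma continuous_vanishing_off_point:
  fixes f :: "'a::perfect_space \<Rightarrow> 'b::{t1_space, zero}"
  assumes "continuous_on UNIV f" "\<And>x. x \<noteq> a \<Longrightarrow> f x = 0"
  shows "f z = 0"
  using continuous_constant_on_closure[of "- {a}" f 0 z] assms
  by (simp add: closure_complement)

lemma g_basis_lowest_coeffs_zero:
  fixes c :: "nat \<Rightarrow> nat \<Rightarrow> real"
  assumes zero: "\<forall>x y. (\<Sum>j\<le>r. \<Sum>k\<le>m. c j k * (x + y) ^ k * (x + 1) ^ (m - k) * y ^ j) = 0"
  shows "\<forall>j\<le>r. c j 0 = 0"
proof -
  define p where "p x = (\<Sum>j\<le>r. (c j 0 * (-1) ^ j) * x ^ j)" for x :: real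
  have "p x = 0" if "x \<noteq> -1" for x
  proof -
    have inner: "(\<Sum>k\<le>m. c j k * (x + - x) ^ k * (x + 1) ^ (m - k) * (- x) ^ j) =
        (x + 1) ^ m * (c j 0 * (- x) ^ j)" for j
    proof -
      have "(\<Sum>k\<le>m. c j k * (x + - x) ^ k * (x + 1) ^ (m - k) * (- x) ^ j) =
          (\<Sum>k\<le>m. if k = 0 then c j 0 * (x + 1) ^ m * (- x) ^ j else 0)"
        by (intro sum.cong) auto
      then show ?thesis by simp
    qed
    have "0 = (\<Sum>j\<le>r. \<Sum>k\<le>m. c j k * (x + - x) ^ k * (x + 1) ^ (m - k) * (- x) ^ j)"
      using zero[rule_format, of x "- x"] by simp
    also have "\<dots> = (x + 1) ^ m * (\<Sum>j\<le>r. c j 0 * (- x) ^ j)"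
      unfolding inner sum_distrib_left ..
    also have "(\<Sum>j\<le>r. c j 0 * (- x) ^ j) = p x"
      unfolding p_def by (simp add: power_minus[of x] mult.assoc)
    finally have "(x + 1) ^ m * p x = 0" by simp
    moreover have "(x + 1) ^ m \<noteq> 0" using that by (simp add: add_eq_0_iff)
    ultimately show ?thesis by (metis mult_eq_0_iff)
  qed
  moreover have "continuous_on UNIV p" unfolding p_def by (intro continuous_intros)
  ultimately have "\<forall>x. p x = 0" using continuous_vanishing_off_point[of p "-1"] by blast
  then show ?thesis unfolding p_def polyfun_eq_0 by simp
qed

lemma g_basis_independent:
  fixes c :: "nat \<Rightarrow> nat \<Rightarrow> real"
  shows "\<forall>x y. (\<Sum>j\<le>r. \<Sum>k\<le>m. c j k * (x + y) ^ k * (x + 1) ^ (m - k) * y ^ j) = 0 \<Longrightarrow>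
    \<forall>j\<le>r. \<forall>k\<le>m. c j k = 0"
proof (induction m arbitrary: c)
  case 0
  then show ?case using g_basis_lowest_coeffs_zero[where m = 0] by simp
next
  case (Suc m)
  have low: "\<forall>j\<le>r. c j 0 = 0" by (rule g_basis_lowest_coeffs_zero[OF Suc.prems])
  define Q where "Q x y = (\<Sum>j\<le>r. \<Sum>k\<le>m. c j (Suc k) * (x + y) ^ k * (x + 1) ^ (m - k) * y ^ j)" for x y
  have factor: "(\<Sum>j\<le>r. \<Sum>k\<le>Suc m. c j k * (x + y) ^ k * (x + 1) ^ (Suc m - k) * y ^ j) = (x + y) * Q x y"
    for x y
    using low unfolding Q_def sum.atMost_Suc_shift
    by (simp add: sum_distrib_left mult_ac)
  have "Q x y = 0" for x y
  proof -
    have "Q x y' = 0" if "y' \<noteq> - x" for y'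
      using Suc.prems factor[of x y'] that by auto
    moreover have "continuous_on UNIV (Q x)" unfolding Q_def by (intro continuous_intros)
    ultimately show ?thesis using continuous_vanishing_off_point[of "Q x" "- x"] by blast
  qed
  then have high: "\<forall>j\<le>r. \<forall>k\<le>m. c j (Suc k) = 0"
    using Suc.IH[of "\<lambda>j k. c j (Suc k)"] unfolding Q_def by blast
  show ?case
  proof (intro allI impI)
    fix j k assume "j \<le> r" "k \<le> Suc m"
    then show "c j k = 0" using low high by (cases k) auto
  qed
qed

section \<open>Sequences of mutations\<close>

lemma fstar_cong: "\<forall>i<n. V i = W i \<Longrightarrow> fstar n V x y = fstar n W x y"
  unfolding fstar_def by (simp only: dep_patterns_cong)

lemma fstar_diff_telescope:
  fixes Vs :: "nat \<Rightarrow> nat \<Rightarrow> real^'r::finite"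
  assumes rn: "CARD('r) \<le> n"
  shows "\<forall>s<N. mutation n (Vs s) (Vs (Suc s)) (Gs s) \<Longrightarrow>
    fstar n (Vs 0) x y - fstar n (Vs N) x y = g_poly CARD('r) (n - CARD('r)) (\<lambda>j k. \<Sum>s<N. Gs s j k) x y"
proof (induction N)
  case 0
  then show ?case by (simp add: g_poly_def)
next
  case (Suc N)
  have "fstar n (Vs 0) x y - fstar n (Vs (Suc N)) x y =
      (fstar n (Vs 0) x y - fstar n (Vs N) x y) + (fstar n (Vs N) x y - fstar n (Vs (Suc N)) x y)"
    by simp
  also have "\<dots> = g_poly CARD('r) (n - CARD('r)) (\<lambda>j k. (\<Sum>s<N. Gs s j k) + Gs N j k) x y"
    using Suc fstar_diff_mutation[OF rn] by (simp add: g_poly_add)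
  finally show ?case by simp
qed

lemma fstar_diff_mut_seq:
  fixes V W :: "nat \<Rightarrow> real^'r::finite"
  assumes "CARD('r) \<le> n" "mut_seq n W V G"
  shows "fstar n W x y - fstar n V x y = g_poly CARD('r) (n - CARD('r)) G x y"
proof -
  obtain Vs :: "nat \<Rightarrow> nat \<Rightarrow> real^'r" and Gs N where
    seq: "\<forall>i<n. Vs 0 i = W i" "\<forall>i<n. Vs N i = V i" "\<forall>s<N. mutation n (Vs s) (Vs (Suc s)) (Gs s)"
      "G = (\<lambda>j k. \<Sum>s<N. Gs s j k)"
    using assms(2) unfolding mut_seq_def by blast
  then show ?thesis
    using fstar_diff_telescope[OF assms(1) seq(3)] fstar_cong[OF seq(1)] fstar_cong[OF seq(2)] by simp
qed

theorem theorem1p13: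
  fixes V W :: "nat \<Rightarrow> real^'r" and n :: nat
  assumes "CARD('r) \<le> n"
    and "gen_pos n V" and "gen_pos n W"
  shows "\<forall>G. mut_seq n W V G \<longrightarrow>
     (\<forall>x y :: real. fstar n W x y - fstar n V x y =
        (\<Sum>j\<le>CARD('r). \<Sum>k\<le>n - CARD('r).
            of_int (G j k) * (x + y) ^ k * (x + 1) ^ (n - CARD('r) - k) * y ^ j)) \<and>
     (\<forall>G'. mut_seq n V W G' \<longrightarrow>
        (\<forall>j\<le>CARD('r). \<forall>k\<le>n - CARD('r). G j k = - G' j k))"
proof (intro allI impI conjI)
  fix G x y assume "mut_seq n W V G"
  then show "fstar n W x y - fstar n V x y =
      (\<Sum>j\<le>CARD('r). \<Sum>k\<le>n - CARD('r).
          of_int (G j k) * (x + y) ^ k * (x + 1) ^ (n - CARD('r) - k) * y ^ j)"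
    using fstar_diff_mut_seq[OF assms(1)] unfolding g_poly_def by blast
next
  fix G G' j k assume G: "mut_seq n W V G" and G': "mut_seq n V W G'"
    and jk: "j \<le> CARD('r)" "k \<le> n - CARD('r)"
  have "g_poly CARD('r) (n - CARD('r)) (\<lambda>j k. G j k + G' j k) x y = 0" for x y
    using fstar_diff_mut_seq[OF assms(1) G, of x y] fstar_diff_mut_seq[OF assms(1) G', of x y]
    by (simp add: g_poly_add)
  then have "\<forall>j\<le>CARD('r). \<forall>k\<le>n - CARD('r). real_of_int (G j k + G' j k) = 0"
    unfolding g_poly_def by (intro g_basis_independent) blast
  then have "real_of_int (G j k + G' j k) = 0" using jk by blast
  then show "G j k = - G' j k" by linarith
qed

end
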